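(* Let $Q$ and $R$ be $d\times d$ positive semidefinite matrices, and put $y=\sum_{k=1}^d\sqrt{Q_{kk}R_{kk}}$. Then for every unitarily invariant norm $|||\cdot|||$ on $d\times d$ matrices ($d\ge2$), $$|||Q+R|||\le \left|\left|\left|\begin{pmatrix}\operatorname{Tr}Q & y\\ y&\operatorname{Tr}R\end{pmatrix}\oplus 0_{d-2}\right|\right|\right|.$$ Moreover, for the Schatten quasi-norms with $0<q\le1$ the reversed inequality holds: $\|Q+R\|_q\ge \left\|\begin{pmatrix}\operatorname{Tr}Q & y\\ y&\operatorname{Tr}R\end{pmatrix}\right\|_q$.
   Context: $\|X\|_q=(\operatorname{Tr}|X|^q)^{1/q}$ with $|X|=(X^*X)^{1/2}$; $0_{d-2}$ is the $(d-2)\times(d-2)$ zero matrix. *)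

theory Defs
  imports Jordan_Normal_Form.Schur_Decomposition Jordan_Normal_Form.Char_Poly
begin

definition mtrace :: "complex mat \<Rightarrow> complex" where
  "mtrace A = (\<Sum>i<dim_row A. A $$ (i,i))"

definition psd_mat :: "nat \<Rightarrow> complex mat \<Rightarrow> bool" where
  "psd_mat d A \<longleftrightarrow> A \<in> carrier_mat d d \<and> mat_adjoint A = A \<and>
     (\<forall>v \<in> carrier_vec d. Im ((A *\<^sub>v v) \<bullet>c v) = 0 \<and> Re ((A *\<^sub>v v) \<bullet>c v) \<ge> 0)"

definition unitary_mat :: "nat \<Rightarrow> complex mat \<Rightarrow> bool" where
  "unitary_mat d U \<longleftrightarrow> U \<in> carrier_mat d d \<and> mat_adjoint U * U = 1\<^sub>m d"

definition ui_norm :: "nat \<Rightarrow> (complex mat \<Rightarrow> real) \<Rightarrow> bool" where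
  "ui_norm d N \<longleftrightarrow>
     (\<forall>A \<in> carrier_mat d d. N A \<ge> 0 \<and> (N A = 0 \<longleftrightarrow> A = 0\<^sub>m d d)) \<and>
     (\<forall>A \<in> carrier_mat d d. \<forall>c. N (c \<cdot>\<^sub>m A) = cmod c * N A) \<and>
     (\<forall>A \<in> carrier_mat d d. \<forall>B \<in> carrier_mat d d. N (A + B) \<le> N A + N B) \<and>
     (\<forall>A \<in> carrier_mat d d. \<forall>U V. unitary_mat d U \<longrightarrow> unitary_mat d V \<longrightarrow> N (U * A * V) = N A)"

definition eigvals_mult :: "complex mat \<Rightarrow> complex list" where
  "eigvals_mult A = (SOME es. char_poly A = (\<Prod>e\<leftarrow>es. [:- e, 1:]))"

text \<open>Schatten q-(quasi-)norm: (Tr |X|^q)^(1/q), |X| = (X^* X)^(1/2); the eigenvalues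
  of X^* X are the squared singular values of X.\<close>
definition schatten :: "real \<Rightarrow> complex mat \<Rightarrow> real" where
  "schatten q X = (\<Sum>e\<leftarrow>eigvals_mult (mat_adjoint X * X). Re e powr (q/2)) powr (1/q)"

definition mat2 :: "complex \<Rightarrow> complex \<Rightarrow> complex \<Rightarrow> complex \<Rightarrow> complex mat" where
  "mat2 a b c e = mat_of_rows_list 2 [[a, b], [c, e]]"

definition dsum_zero :: "complex mat \<Rightarrow> nat \<Rightarrow> complex mat" where
  "dsum_zero M k = four_block_mat M (0\<^sub>m (dim_row M) k) (0\<^sub>m k (dim_col M)) (0\<^sub>m k k)"

end

theory Submission
  imports Defs Jordan_Normal_Form.Spectral_Radius "HOL-Analysis.Convex"
begin

(* Let x be the eigenvalues of Q + R and z0, z1 those of the real symmetric matrix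
   M = [[Tr Q, y], [y, Tr R]]; as y^2 <= Tr Q Tr R by Cauchy-Schwarz, z0, z1 >= 0 and
   z0 + z1 = Tr Q + Tr R = sum x.
   If u is a unit eigenvector of Q + R for x_i, put s^2 = u*Qu and t^2 = u*Ru, so that
   x_i = s^2 + t^2. Cauchy-Schwarz for the semidefinite forms of Q and R gives
   |(Qu)_k| <= sqrt(Q_kk) s and |(Ru)_k| <= sqrt(R_kk) t, hence
   x_i^2 = |(Q + R)u|^2 <= s^2 Tr Q + 2 s t y + t^2 Tr R <= max(z0, z1) (s^2 + t^2) = max(z0, z1) x_i.
   So 0 <= x_i <= max(z0, z1) and x is majorized by (z0, z1, 0, ..., 0). A function of the
   spectrum that does not decrease when mass moves from a smaller to a larger coordinate is
   therefore at least as large at (z0, z1, 0, ..., 0) as at x. This applies to v |-> N(diag v)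
   for a unitarily invariant norm N (convexity and invariance under swapping coordinates) and
   to v |-> - sum_k v_k^q for 0 < q <= 1 (concavity of t^q). *)

lemma mat_adjoint_dim [simp]:
  "dim_row (mat_adjoint A) = dim_col A" "dim_col (mat_adjoint A) = dim_row A"
  unfolding mat_adjoint_def by (auto simp: mat_of_rows_def)

lemma mat_adjoint_carrier [simp]: "A \<in> carrier_mat n m \<Longrightarrow> mat_adjoint A \<in> carrier_mat m n"
  by auto

lemma index_mat_adjoint [simp]:
  "i < dim_col A \<Longrightarrow> j < dim_row A \<Longrightarrow> mat_adjoint A $$ (i,j) = cnj (A $$ (j,i))"
  unfolding mat_adjoint_def by (auto simp: mat_of_rows_def)

lemma mat_adjoint_mat_adjoint [simp]: "mat_adjoint (mat_adjoint (A :: complex mat)) = A"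
  by (rule eq_matI) auto

lemma index_mult_mat_sum:
  "A \<in> carrier_mat n m \<Longrightarrow> B \<in> carrier_mat m p \<Longrightarrow> i < n \<Longrightarrow> j < p \<Longrightarrow>
    (A * B) $$ (i,j) = (\<Sum>k<m. A $$ (i,k) * B $$ (k,j))"
  by (auto simp: scalar_prod_def lessThan_atLeast0 intro!: sum.cong)

lemma mult_carrier_mat_square [simp]:
  "A \<in> carrier_mat n n \<Longrightarrow> B \<in> carrier_mat n n \<Longrightarrow> A * B \<in> carrier_mat n n"
  by auto

lemma mat_adjoint_mult:
  assumes "(A :: complex mat) \<in> carrier_mat n m" "B \<in> carrier_mat m p"
  shows "mat_adjoint (A * B) = mat_adjoint B * mat_adjoint A"
proof (rule eq_matI)
  fix i j assume "i < dim_row (mat_adjoint B * mat_adjoint A)" "j < dim_col (mat_adjoint B * mat_adjoint A)"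
  with assms have i: "i < p" and j: "j < n" by auto
  have "mat_adjoint (A * B) $$ (i,j) = cnj ((A * B) $$ (j,i))" using assms i j by auto
  also have "\<dots> = (\<Sum>k<m. cnj (A $$ (j,k)) * cnj (B $$ (k,i)))"
    using assms i j by (subst index_mult_mat_sum[OF assms]) (auto simp: cnj_sum)
  also have "\<dots> = (mat_adjoint B * mat_adjoint A) $$ (i,j)"
    using assms i j by (subst index_mult_mat_sum[of _ p m _ n]) (auto simp: mult.commute)
  finally show "mat_adjoint (A * B) $$ (i,j) = (mat_adjoint B * mat_adjoint A) $$ (i,j)" .
qed (use assms in auto)

lemma mat_adjoint_add:
  "(A :: complex mat) \<in> carrier_mat n m \<Longrightarrow> B \<in> carrier_mat n m \<Longrightarrow>
    mat_adjoint (A + B) = mat_adjoint A + mat_adjoint B"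
  by (rule eq_matI) auto

lemma mat_adjoint_one [simp]: "mat_adjoint (1\<^sub>m n :: complex mat) = 1\<^sub>m n"
  by (rule eq_matI) auto

lemma unitary_mat_carrier: "unitary_mat n U \<Longrightarrow> U \<in> carrier_mat n n"
  unfolding unitary_mat_def by simp

lemma unitary_mat_one: "unitary_mat n (1\<^sub>m n)"
  unfolding unitary_mat_def by simp

lemma unitary_mat_right_inverse: "unitary_mat n U \<Longrightarrow> U * mat_adjoint U = 1\<^sub>m n"
  using mat_mult_left_right_inverse[of "mat_adjoint U" n U] unfolding unitary_mat_def by auto

lemma unitary_mat_adjoint: "unitary_mat n U \<Longrightarrow> unitary_mat n (mat_adjoint U)"
  using unitary_mat_right_inverse unfolding unitary_mat_def by auto

lemma unitary_mat_mult:
  assumes U: "unitary_mat n U" and V: "unitary_mat n V"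
  shows "unitary_mat n (U * V)"
proof -
  have c: "U \<in> carrier_mat n n" "V \<in> carrier_mat n n"
    using U V by (auto simp: unitary_mat_carrier)
  have "mat_adjoint (U * V) * (U * V) = mat_adjoint V * ((mat_adjoint U * U) * V)"
    using c by (simp add: mat_adjoint_mult assoc_mult_mat[of _ n n _ n _ n])
  also have "\<dots> = 1\<^sub>m n" using U V c unfolding unitary_mat_def by auto
  finally show ?thesis using c unfolding unitary_mat_def by auto
qed

lemma unitary_mat_conj_mult:
  assumes U: "unitary_mat n U" and A: "A \<in> carrier_mat n n" and B: "B \<in> carrier_mat n n"
  shows "(U * A * mat_adjoint U) * (U * B * mat_adjoint U) = U * (A * B) * mat_adjoint U"
proof -
  have c: "U \<in> carrier_mat n n" "mat_adjoint U \<in> carrier_mat n n"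
    using U by (auto simp: unitary_mat_carrier)
  have cancel: "mat_adjoint U * (U * C) = C" if "C \<in> carrier_mat n n" for C
    using U c that unfolding unitary_mat_def by (simp flip: assoc_mult_mat[of _ n n _ n _ n])
  show ?thesis using c A B by (simp add: assoc_mult_mat[of _ n n _ n _ n] cancel)
qed

definition block_diag :: "complex mat \<Rightarrow> complex mat \<Rightarrow> complex mat" where
  "block_diag A B = four_block_mat A (0\<^sub>m (dim_row A) (dim_col B)) (0\<^sub>m (dim_row B) (dim_col A)) B"

lemma block_diag_carrier [simp]:
  "A \<in> carrier_mat n1 m1 \<Longrightarrow> B \<in> carrier_mat n2 m2 \<Longrightarrow> block_diag A B \<in> carrier_mat (n1 + n2) (m1 + m2)"
  unfolding block_diag_def by auto

lemma block_diag_mult: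
  assumes "A1 \<in> carrier_mat n1 m1" "B1 \<in> carrier_mat n2 m2" "A2 \<in> carrier_mat m1 p1" "B2 \<in> carrier_mat m2 p2"
  shows "block_diag A1 B1 * block_diag A2 B2 = block_diag (A1 * A2) (B1 * B2)"
  unfolding block_diag_def using assms
  by (subst mult_four_block_mat[of _ n1 m1 _ m2 _ n2 _ _ p1 _ p2]) auto

lemma mat_adjoint_block_diag:
  "mat_adjoint (block_diag (A :: complex mat) B) = block_diag (mat_adjoint A) (mat_adjoint B)"
  unfolding block_diag_def by (rule eq_matI) auto

lemma unitary_mat_block_diag:
  assumes "unitary_mat n1 U1" "unitary_mat n2 U2"
  shows "unitary_mat (n1 + n2) (block_diag U1 U2)"
proof -
  have "mat_adjoint (block_diag U1 U2) * block_diag U1 U2 = block_diag (1\<^sub>m n1) (1\<^sub>m n2)"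
    using assms unfolding mat_adjoint_block_diag unitary_mat_def by (subst block_diag_mult) auto
  also have "\<dots> = 1\<^sub>m (n1 + n2)"
    unfolding block_diag_def by (rule eq_matI) auto
  finally show ?thesis using assms unfolding unitary_mat_def by auto
qed

lemma block_diag_unitary_conj:
  assumes "U1 \<in> carrier_mat n1 n1" "U2 \<in> carrier_mat n2 n2" "A1 \<in> carrier_mat n1 n1" "A2 \<in> carrier_mat n2 n2"
  shows "block_diag U1 U2 * block_diag A1 A2 * mat_adjoint (block_diag U1 U2)
    = block_diag (U1 * A1 * mat_adjoint U1) (U2 * A2 * mat_adjoint U2)"
  using assms unfolding mat_adjoint_block_diag
  by (simp add: block_diag_mult[of _ n1 n1 _ n2 n2 _ n1 _ n2])

definition real_diag_mat :: "nat \<Rightarrow> (nat \<Rightarrow> real) \<Rightarrow> complex mat" where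
  "real_diag_mat n x = mat n n (\<lambda>(i,j). if i = j then complex_of_real (x i) else 0)"

lemma real_diag_mat_carrier [simp]: "real_diag_mat n x \<in> carrier_mat n n"
  and real_diag_mat_dim [simp]: "dim_row (real_diag_mat n x) = n" "dim_col (real_diag_mat n x) = n"
  unfolding real_diag_mat_def by auto

lemma index_real_diag_mat [simp]:
  "i < n \<Longrightarrow> j < n \<Longrightarrow> real_diag_mat n x $$ (i,j) = (if i = j then complex_of_real (x i) else 0)"
  unfolding real_diag_mat_def by auto

lemma mat_adjoint_real_diag_mat [simp]: "mat_adjoint (real_diag_mat n x) = real_diag_mat n x"
  by (rule eq_matI) auto

lemma real_diag_mat_mult:
  "real_diag_mat n x * real_diag_mat n y = real_diag_mat n (\<lambda>i. x i * y i)"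
proof (rule eq_matI)
  fix i j assume "i < dim_row (real_diag_mat n (\<lambda>i. x i * y i))" "j < dim_col (real_diag_mat n (\<lambda>i. x i * y i))"
  hence i: "i < n" and j: "j < n" by auto
  have "(real_diag_mat n x * real_diag_mat n y) $$ (i,j)
      = (\<Sum>k<n. real_diag_mat n x $$ (i,k) * real_diag_mat n y $$ (k,j))"
    using i j by (intro index_mult_mat_sum) auto
  also have "\<dots> = (\<Sum>k\<in>{..<n}. if k = i then (if i = j then complex_of_real (x i * y i) else 0) else 0)"
    using i j by (intro sum.cong) auto
  also have "\<dots> = real_diag_mat n (\<lambda>i. x i * y i) $$ (i,j)" using i j by simp
  finally show "(real_diag_mat n x * real_diag_mat n y) $$ (i,j) = real_diag_mat n (\<lambda>i. x i * y i) $$ (i,j)" .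
qed auto

lemma real_diag_mat_combination:
  "complex_of_real s \<cdot>\<^sub>m real_diag_mat n x + complex_of_real t \<cdot>\<^sub>m real_diag_mat n y
    = real_diag_mat n (\<lambda>i. s * x i + t * y i)"
  by (rule eq_matI) auto

lemma real_diag_mat_cong: "(\<And>i. i < n \<Longrightarrow> x i = y i) \<Longrightarrow> real_diag_mat n x = real_diag_mat n y"
  by (rule eq_matI) auto

lemma real_diag_mat_add_dim:
  "real_diag_mat (n1 + n2) x = block_diag (real_diag_mat n1 x) (real_diag_mat n2 (\<lambda>i. x (n1 + i)))"
  unfolding block_diag_def by (rule eq_matI) auto

section \<open>The spectral theorem for Hermitian matrices\<close>

lemma cscalar_prod_self_sum:
  assumes "w \<in> carrier_vec n"
  shows "w \<bullet>c w = complex_of_real (\<Sum>k<n. (cmod (w $ k))\<^sup>2)"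
proof -
  have "w \<bullet>c w = (\<Sum>k<n. w $ k * cnj (w $ k))"
    using assms by (auto simp: scalar_prod_def lessThan_atLeast0 intro!: sum.cong)
  also have "\<dots> = (\<Sum>k<n. complex_of_real ((cmod (w $ k))\<^sup>2))"
    by (simp only: complex_norm_square)
  finally show ?thesis by (simp only: of_real_sum)
qed

lemma unitary_mat_of_corthogonal:
  assumes ws: "set ws \<subseteq> carrier_vec n" "corthogonal ws" "length ws = n"
  defines "c \<equiv> \<lambda>j. 1 / sqrt (\<Sum>k<n. (cmod (ws ! j $ k))\<^sup>2)"
  shows "unitary_mat n (mat n n (\<lambda>(a,j). complex_of_real (c j) * ws ! j $ a))"
    (is "unitary_mat n ?W")
proof -
  have wsc: "ws ! j \<in> carrier_vec n" if "j < n" for j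
    using ws that by auto
  have norm: "complex_of_real (c j * c j) * (ws ! j \<bullet>c ws ! j) = 1" if j: "j < n" for j
  proof -
    define S where "S = (\<Sum>k<n. (cmod (ws ! j $ k))\<^sup>2)"
    have "ws ! j \<bullet>c ws ! j \<noteq> 0" using corthogonalD[OF ws(2)] j ws(3) by auto
    hence "S > 0"
      using cscalar_prod_self_sum[OF wsc[OF j]] unfolding S_def
      by (metis of_real_0 order_le_less sum_nonneg zero_le_power2)
    hence "c j * c j * S = 1" unfolding c_def S_def[symmetric] by (simp add: field_simps)
    thus ?thesis unfolding cscalar_prod_self_sum[OF wsc[OF j]] S_def
      by (metis of_real_1 of_real_mult)
  qed
  have "mat_adjoint ?W * ?W = 1\<^sub>m n"
  proof (rule eq_matI)
    fix i j assume "i < dim_row (1\<^sub>m n)" "j < dim_col (1\<^sub>m n)"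
    hence i: "i < n" and j: "j < n" by auto
    have "(mat_adjoint ?W * ?W) $$ (i,j) = (\<Sum>k<n. cnj (?W $$ (k,i)) * ?W $$ (k,j))"
      using i j by (subst index_mult_mat_sum[of _ n n _ n]) auto
    also have "\<dots> = complex_of_real (c i * c j) * (\<Sum>k<n. ws ! j $ k * cnj (ws ! i $ k))"
      using i j by (auto simp: sum_distrib_left intro!: sum.cong)
    also have "(\<Sum>k<n. ws ! j $ k * cnj (ws ! i $ k)) = ws ! j \<bullet>c ws ! i"
      using wsc[OF i] wsc[OF j] by (auto simp: scalar_prod_def lessThan_atLeast0 intro!: sum.cong)
    also have "complex_of_real (c i * c j) * (ws ! j \<bullet>c ws ! i) = 1\<^sub>m n $$ (i,j)"
    proof (cases "i = j")
      case True
      thus ?thesis using i norm[OF i] by simp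
    next
      case False
      thus ?thesis using corthogonalD[OF ws(2), of j i] i j ws(3) by simp
    qed
    finally show "(mat_adjoint ?W * ?W) $$ (i,j) = 1\<^sub>m n $$ (i,j)" .
  qed auto
  thus ?thesis unfolding unitary_mat_def by auto
qed

lemma unitary_mat_first_col:
  assumes v: "v \<in> carrier_vec n" and v0: "v \<noteq> 0\<^sub>v n"
  obtains W c where "unitary_mat n W" "\<And>a. a < n \<Longrightarrow> W $$ (a,0) = c * v $ a"
proof -
  interpret cof_vec_space n "TYPE(complex)" .
  define b where "b = basis_completion v"
  define ws where "ws = gram_schmidt n b"
  from basis_completion[OF v v0, folded b_def]
  have b: "distinct b" "\<not> lin_dep (set b)" "set b \<subseteq> carrier_vec n" "hd b = v" "length b = n"
    by auto
  have n: "n \<noteq> 0" using v v0 by (cases n) auto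
  with b obtain vs where bv: "b = v # vs" by (cases b) auto
  from gram_schmidt_result[OF b(3,1,2) refl, folded ws_def]
  have ws: "set ws \<subseteq> carrier_vec n" "corthogonal ws" "length ws = n"
    by (auto simp: b(5))
  have "ws ! 0 = hd ws" using ws(3) n by (cases ws) auto
  also have "hd ws = v" using gram_schmidt_hd[OF v, of vs] unfolding ws_def bv .
  finally have "ws ! 0 = v" .
  with n show ?thesis
    using that[OF unitary_mat_of_corthogonal[OF ws],
        of "complex_of_real (1 / sqrt (\<Sum>k<n. (cmod (ws ! 0 $ k))\<^sup>2))"] by auto
qed

lemma unitary_conj_eigenvector_col:
  assumes A: "A \<in> carrier_mat n n" and W: "unitary_mat n W"
    and W0: "\<And>a. a < n \<Longrightarrow> W $$ (a,0) = c * v $ a"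
    and v: "v \<in> carrier_vec n" "A *\<^sub>v v = e \<cdot>\<^sub>v v" and k: "k < n"
  shows "(mat_adjoint W * A * W) $$ (k,0) = (if k = 0 then e else 0)"
proof -
  have Wc: "W \<in> carrier_mat n n" using W by (rule unitary_mat_carrier)
  have AW0: "(A * W) $$ (a,0) = e * W $$ (a,0)" if a: "a < n" for a
  proof -
    have "(A * W) $$ (a,0) = c * (\<Sum>b<n. A $$ (a,b) * v $ b)"
      using A Wc a k W0 by (subst index_mult_mat_sum[of _ n n _ n]) (auto simp: sum_distrib_left intro!: sum.cong)
    also have "(\<Sum>b<n. A $$ (a,b) * v $ b) = (A *\<^sub>v v) $ a"
      using A v(1) a by (auto simp: scalar_prod_def lessThan_atLeast0 intro!: sum.cong)
    finally show ?thesis using v a W0[OF a] by simp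
  qed
  have "(mat_adjoint W * A * W) $$ (k,0) = (mat_adjoint W * (A * W)) $$ (k,0)"
    using A Wc by (simp add: assoc_mult_mat[of _ n n _ n _ n])
  also have "\<dots> = e * (\<Sum>a<n. mat_adjoint W $$ (k,a) * W $$ (a,0))"
    using A Wc k AW0 by (subst index_mult_mat_sum[of _ n n _ n]) (auto simp: sum_distrib_left intro!: sum.cong)
  also have "(\<Sum>a<n. mat_adjoint W $$ (k,a) * W $$ (a,0)) = (mat_adjoint W * W) $$ (k,0)"
    using Wc k by (subst index_mult_mat_sum[of _ n n _ n]) auto
  finally show ?thesis using W k unfolding unitary_mat_def by auto
qed

lemma hermitian_first_col_block:
  assumes A: "A \<in> carrier_mat (Suc n) (Suc n)" and herm: "mat_adjoint A = A"
    and col0: "\<And>k. k < Suc n \<Longrightarrow> A $$ (k,0) = (if k = 0 then e else 0)"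
  obtains r A3 where "A3 \<in> carrier_mat n n" "mat_adjoint A3 = A3"
    "A = block_diag (real_diag_mat 1 (\<lambda>_. r)) A3"
proof -
  have conj: "A $$ (j,i) = cnj (A $$ (i,j))" if "i < Suc n" "j < Suc n" for i j
  proof -
    have "A $$ (j,i) = mat_adjoint A $$ (j,i)" by (simp only: herm)
    also have "\<dots> = cnj (A $$ (i,j))" using that A by simp
    finally show ?thesis .
  qed
  define A3 where "A3 = mat n n (\<lambda>(i,j). A $$ (Suc i, Suc j))"
  have A3c: "A3 \<in> carrier_mat n n" unfolding A3_def by simp
  have A3h: "mat_adjoint A3 = A3"
  proof (rule eq_matI)
    fix i j assume "i < dim_row A3" "j < dim_col A3"
    thus "mat_adjoint A3 $$ (i,j) = A3 $$ (i,j)" using conj[of "Suc j" "Suc i"] by (simp add: A3_def)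
  qed (simp_all add: A3_def)
  have "e = A $$ (0,0)" using col0[of 0] by simp
  also have "\<dots> = cnj (A $$ (0,0))" by (rule conj) simp_all
  also have "\<dots> = cnj e" using col0[of 0] by simp
  finally have "Im e = Im (cnj e)" by (rule arg_cong)
  hence "e = complex_of_real (Re e)" by (simp add: complex_eq_iff)
  then obtain r where r: "e = complex_of_real r" by blast
  have row0: "A $$ (0,k) = (if k = 0 then e else 0)" if "k < Suc n" for k
  proof -
    have "A $$ (0,k) = cnj (A $$ (k,0))" by (rule conj) (use that in simp_all)
    thus ?thesis using col0[OF that] r by simp
  qed
  have "A = block_diag (real_diag_mat 1 (\<lambda>_. r)) A3"
    unfolding block_diag_def A3_def using A col0 row0 r
    by (intro eq_matI) (auto simp: nat.case_eq_if)
  thus ?thesis using that A3c A3h by blast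
qed

lemma hermitian_deflation:
  assumes A: "A \<in> carrier_mat (Suc n) (Suc n)" and herm: "mat_adjoint A = A"
  obtains W r A3 where "unitary_mat (Suc n) W" "A3 \<in> carrier_mat n n" "mat_adjoint A3 = A3"
    "A = W * block_diag (real_diag_mat 1 (\<lambda>_. r)) A3 * mat_adjoint W"
proof -
  obtain e where "eigenvalue A e"
    using spectrum_non_empty[OF A] unfolding spectrum_def by auto
  from find_eigenvector[OF A this] obtain v where "eigenvector A v e" by blast
  hence v: "v \<in> carrier_vec (Suc n)" "v \<noteq> 0\<^sub>v (Suc n)" "A *\<^sub>v v = e \<cdot>\<^sub>v v"
    using A unfolding eigenvector_def by auto
  obtain W c where W: "unitary_mat (Suc n) W" and W0: "\<And>a. a < Suc n \<Longrightarrow> W $$ (a,0) = c * v $ a"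
    using unitary_mat_first_col[OF v(1,2)] by blast
  have Wc: "W \<in> carrier_mat (Suc n) (Suc n)" using W by (rule unitary_mat_carrier)
  define A' where "A' = mat_adjoint W * A * W"
  have "A' \<in> carrier_mat (Suc n) (Suc n)" unfolding A'_def using A Wc by auto
  moreover have "mat_adjoint A' = A'"
    unfolding A'_def using A Wc herm
    by (simp add: mat_adjoint_mult[of _ "Suc n" "Suc n" _ "Suc n"] assoc_mult_mat[of _ "Suc n" "Suc n" _ "Suc n" _ "Suc n"])
  moreover have "A' $$ (k,0) = (if k = 0 then e else 0)" if "k < Suc n" for k
    unfolding A'_def using unitary_conj_eigenvector_col[OF A W W0 v(1,3) that] .
  ultimately obtain r A3 where A3: "A3 \<in> carrier_mat n n" "mat_adjoint A3 = A3"
    and A': "A' = block_diag (real_diag_mat 1 (\<lambda>_. r)) A3"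
    by (rule hermitian_first_col_block)
  have "W * A' * mat_adjoint W = (W * mat_adjoint W) * A * (W * mat_adjoint W)"
    unfolding A'_def using A Wc by (simp add: assoc_mult_mat[of _ "Suc n" "Suc n" _ "Suc n" _ "Suc n"])
  hence "A = W * A' * mat_adjoint W" using A unitary_mat_right_inverse[OF W] by simp
  thus ?thesis using that[OF W A3] unfolding A' by simp
qed

theorem hermitian_unitary_diagonalization:
  assumes "A \<in> carrier_mat n n" "mat_adjoint A = A"
  shows "\<exists>U x. unitary_mat n U \<and> A = U * real_diag_mat n x * mat_adjoint U"
  using assms
proof (induction n arbitrary: A)
  case 0
  have "A = 1\<^sub>m 0 * real_diag_mat 0 (\<lambda>_. 0) * mat_adjoint (1\<^sub>m 0)"
    using 0 by (intro eq_matI) auto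
  thus ?case using unitary_mat_one by blast
next
  case (Suc n)
  obtain W e A3 where W: "unitary_mat (Suc n) W" and A3: "A3 \<in> carrier_mat n n" "mat_adjoint A3 = A3"
    and A: "A = W * block_diag (real_diag_mat 1 (\<lambda>_. e)) A3 * mat_adjoint W"
    using hermitian_deflation[OF Suc.prems] by blast
  obtain U3 x3 where U3: "unitary_mat n U3" and A3d: "A3 = U3 * real_diag_mat n x3 * mat_adjoint U3"
    using Suc.IH[OF A3] by blast
  define V where "V = block_diag (1\<^sub>m 1) U3"
  define x where "x = (\<lambda>i. if i = 0 then e else x3 (i - 1))"
  have V: "unitary_mat (Suc n) V"
    using unitary_mat_block_diag[OF unitary_mat_one[of 1] U3] unfolding V_def by simp
  have Vc: "V \<in> carrier_mat (Suc n) (Suc n)" and Wc: "W \<in> carrier_mat (Suc n) (Suc n)"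
    using V W by (auto simp: unitary_mat_carrier)
  have "real_diag_mat (Suc n) x = block_diag (real_diag_mat 1 (\<lambda>_. e)) (real_diag_mat n x3)"
    using real_diag_mat_add_dim[of 1 n x] real_diag_mat_cong[of 1 x "\<lambda>_. e"] by (simp add: x_def)
  hence "V * real_diag_mat (Suc n) x * mat_adjoint V = block_diag (real_diag_mat 1 (\<lambda>_. e)) A3"
    unfolding V_def A3d using unitary_mat_carrier[OF U3] unitary_mat_one[of 1, unfolded unitary_mat_def]
    by (simp add: block_diag_unitary_conj[of _ 1 _ n])
  hence "A = W * (V * real_diag_mat (Suc n) x * mat_adjoint V) * mat_adjoint W"
    unfolding A by simp
  also have "\<dots> = (W * V) * real_diag_mat (Suc n) x * mat_adjoint (W * V)"
    using Wc Vc
    by (simp add: mat_adjoint_mult[of _ "Suc n" "Suc n" _ "Suc n"] assoc_mult_mat[of _ "Suc n" "Suc n" _ "Suc n" _ "Suc n"])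
  finally show ?case using unitary_mat_mult[OF W V] by blast
qed

lemma mtrace_mult_comm:
  assumes A: "A \<in> carrier_mat n m" and B: "B \<in> carrier_mat m n"
  shows "mtrace (A * B) = mtrace (B * A)"
proof -
  have "mtrace (A * B) = (\<Sum>i<n. \<Sum>k<m. A $$ (i,k) * B $$ (k,i))"
    unfolding mtrace_def using A by (auto intro!: sum.cong index_mult_mat_sum[OF A B])
  also have "\<dots> = (\<Sum>k<m. \<Sum>i<n. B $$ (k,i) * A $$ (i,k))"
    by (subst sum.swap) (simp add: mult.commute)
  also have "\<dots> = mtrace (B * A)"
    unfolding mtrace_def using B by (auto intro!: sum.cong index_mult_mat_sum[OF B A, symmetric])
  finally show ?thesis .
qed

lemma mtrace_unitary_conj:
  assumes U: "unitary_mat n U" and A: "A \<in> carrier_mat n n"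
  shows "mtrace (U * A * mat_adjoint U) = mtrace A"
proof -
  have Uc: "U \<in> carrier_mat n n" using U by (rule unitary_mat_carrier)
  have "mtrace (U * A * mat_adjoint U) = mtrace (mat_adjoint U * (U * A))"
    using Uc A by (intro mtrace_mult_comm) auto
  also have "mat_adjoint U * (U * A) = A"
    using U Uc A unfolding unitary_mat_def by (simp flip: assoc_mult_mat[of _ n n _ n _ n])
  finally show ?thesis .
qed

lemma mtrace_real_diag_mat: "mtrace (real_diag_mat n x) = complex_of_real (\<Sum>i<n. x i)"
  unfolding mtrace_def by simp

lemma mat_adjoint_unitary_diag:
  assumes "unitary_mat n U"
  shows "mat_adjoint (U * real_diag_mat n x * mat_adjoint U) = U * real_diag_mat n x * mat_adjoint U"
  using unitary_mat_carrier[OF assms]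
  by (simp add: mat_adjoint_mult[of _ n n _ n] assoc_mult_mat[of _ n n _ n _ n])

lemma unitary_diag_square:
  assumes "unitary_mat n U"
  shows "(U * real_diag_mat n x * mat_adjoint U) * (U * real_diag_mat n x * mat_adjoint U)
    = U * real_diag_mat n (\<lambda>i. x i * x i) * mat_adjoint U"
  using unitary_mat_conj_mult[OF assms] by (simp add: real_diag_mat_mult)

lemma count_mset_linear_factors:
  "order a (\<Prod>e\<leftarrow>es. [:- e, 1:]) = count (mset es) (a :: 'a :: idom)"
proof -
  have "order a (\<Prod>e\<leftarrow>es. [:- e, 1:]) = (\<Sum>e\<leftarrow>es. order a [:- e, 1:])"
    by (subst order_prod_list) (auto simp: o_def)
  also have "\<dots> = count (mset es) a"
    by (induction es) (auto simp: order_linear')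
  finally show ?thesis .
qed

lemma mset_eq_if_linear_factors_eq:
  "(\<Prod>e\<leftarrow>es. [:- e, 1:]) = (\<Prod>e\<leftarrow>fs. [:- e, 1:]) \<Longrightarrow> mset es = mset (fs :: 'a :: idom list)"
  by (metis count_mset_linear_factors multiset_eqI)

lemma sum_list_map_mset_cong:
  fixes f :: "'a \<Rightarrow> 'b :: comm_monoid_add"
  assumes "mset xs = mset ys"
  shows "(\<Sum>x\<leftarrow>xs. f x) = (\<Sum>x\<leftarrow>ys. f x)"
proof -
  have "(\<Sum>x\<leftarrow>xs. f x) = sum_mset (mset (map f xs))" by (simp only: sum_mset_sum_list)
  also have "mset (map f xs) = mset (map f ys)" using assms by simp
  also have "sum_mset (mset (map f ys)) = (\<Sum>x\<leftarrow>ys. f x)" by (simp only: sum_mset_sum_list)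
  finally show ?thesis .
qed

(* eigvals_mult is defined by a choice, so only its multiset is determined. *)
lemma eigvals_mult_unitary_diag:
  assumes U: "unitary_mat n U"
  shows "mset (eigvals_mult (U * real_diag_mat n x * mat_adjoint U))
    = mset (map (\<lambda>i. complex_of_real (x i)) [0..<n])"
proof -
  let ?X = "U * real_diag_mat n x * mat_adjoint U"
  let ?es = "map (\<lambda>i. complex_of_real (x i)) [0..<n]"
  have "similar_mat_wit ?X (real_diag_mat n x) U (mat_adjoint U)"
    unfolding similar_mat_wit_def Let_def
    using U unitary_mat_right_inverse[OF U] unfolding unitary_mat_def by auto
  hence "similar_mat ?X (real_diag_mat n x)" unfolding similar_mat_def by blast
  hence "char_poly ?X = char_poly (real_diag_mat n x)" by (rule char_poly_similar)
  also have "\<dots> = (\<Prod>e\<leftarrow>diag_mat (real_diag_mat n x). [:- e, 1:])"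
    by (rule char_poly_upper_triangular) (auto simp: upper_triangular_def)
  also have "diag_mat (real_diag_mat n x) = ?es"
    unfolding diag_mat_def by (auto intro: nth_equalityI)
  finally have cp: "char_poly ?X = (\<Prod>e\<leftarrow>?es. [:- e, 1:])" .
  hence "char_poly ?X = (\<Prod>e\<leftarrow>eigvals_mult ?X. [:- e, 1:])"
    unfolding eigvals_mult_def by (rule someI)
  thus ?thesis using cp by (metis mset_eq_if_linear_factors_eq)
qed

lemma schatten_unitary_diag:
  assumes U: "unitary_mat n U"
  shows "schatten q (U * real_diag_mat n x * mat_adjoint U) = (\<Sum>i<n. \<bar>x i\<bar> powr q) powr (1/q)"
proof -
  let ?X = "U * real_diag_mat n x * mat_adjoint U"
  have "mset (eigvals_mult (mat_adjoint ?X * ?X)) = mset (map (\<lambda>i. complex_of_real (x i * x i)) [0..<n])"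
    unfolding mat_adjoint_unitary_diag[OF U] unitary_diag_square[OF U] by (rule eigvals_mult_unitary_diag[OF U])
  hence "(\<Sum>e\<leftarrow>eigvals_mult (mat_adjoint ?X * ?X). Re e powr (q/2))
      = (\<Sum>e\<leftarrow>map (\<lambda>i. complex_of_real (x i * x i)) [0..<n]. Re e powr (q/2))"
    by (rule sum_list_map_mset_cong)
  also have "\<dots> = (\<Sum>i<n. (x i * x i) powr (q/2))"
    by (simp add: sum_list_distinct_conv_sum_set atLeast0LessThan)
  also have "\<dots> = (\<Sum>i<n. \<bar>x i\<bar> powr q)"
  proof (rule sum.cong[OF refl])
    fix i
    have "x i * x i = \<bar>x i\<bar> powr 2"
      by (cases "x i = 0") (simp_all add: powr_realpow power2_eq_square)
    hence "(x i * x i) powr (q/2) = (\<bar>x i\<bar> powr 2) powr (q/2)" by (simp only:)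
    also have "\<dots> = \<bar>x i\<bar> powr q" by (subst powr_powr) simp
    finally show "(x i * x i) powr (q/2) = \<bar>x i\<bar> powr q" .
  qed
  finally show ?thesis unfolding schatten_def by simp
qed

section \<open>Positive semidefinite forms and the eigenvalue estimate\<close>

definition sesq_form :: "nat \<Rightarrow> complex mat \<Rightarrow> (nat \<Rightarrow> complex) \<Rightarrow> (nat \<Rightarrow> complex) \<Rightarrow> complex" where
  "sesq_form n A f g = (\<Sum>i<n. \<Sum>j<n. cnj (f i) * A $$ (i,j) * g j)"

lemma sesq_form_mult_vec:
  assumes "A \<in> carrier_mat n n"
  shows "sesq_form n A f f = (A *\<^sub>v vec n f) \<bullet>c vec n f"
proof -
  have "(A *\<^sub>v vec n f) \<bullet>c vec n f = (\<Sum>i<n. (\<Sum>j<n. A $$ (i,j) * f j) * cnj (f i))"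
    using assms by (auto simp: scalar_prod_def lessThan_atLeast0 intro!: sum.cong)
  thus ?thesis unfolding sesq_form_def by (simp add: sum_distrib_left sum_distrib_right ac_simps)
qed

lemma psd_sesq_form:
  assumes "psd_mat n A"
  shows "Im (sesq_form n A f f) = 0" "0 \<le> Re (sesq_form n A f f)"
  using assms sesq_form_mult_vec[of A n f] unfolding psd_mat_def by auto

lemma psd_sesq_form_real:
  assumes "psd_mat n A"
  shows "sesq_form n A f f = complex_of_real (Re (sesq_form n A f f))"
  using psd_sesq_form[OF assms] by (simp add: complex_eq_iff)

lemma hermitian_sesq_form_swap:
  assumes A: "A \<in> carrier_mat n n" "mat_adjoint A = A"
  shows "sesq_form n A g f = cnj (sesq_form n A f g)"
proof -
  have herm: "cnj (A $$ (i,j)) = A $$ (j,i)" if "i < n" "j < n" for i j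
    using index_mat_adjoint[of j A i] A that by simp
  have "cnj (sesq_form n A f g) = (\<Sum>i<n. \<Sum>j<n. f i * A $$ (j,i) * cnj (g j))"
    unfolding sesq_form_def by (auto simp: cnj_sum herm intro!: sum.cong)
  also have "\<dots> = sesq_form n A g f"
    unfolding sesq_form_def by (subst sum.swap) (auto intro!: sum.cong)
  finally show ?thesis by simp
qed

lemma sesq_form_add_scaled:
  "sesq_form n A (\<lambda>i. f i + l * g i) (\<lambda>i. f i + l * g i) =
    sesq_form n A f f + l * sesq_form n A f g + cnj l * sesq_form n A g f + cnj l * l * sesq_form n A g g"
  unfolding sesq_form_def by (simp add: algebra_simps sum.distrib sum_distrib_left)

lemma le_mult_of_quadratic_nonneg:
  fixes a B c :: real
  assumes quadratic: "\<And>t. 0 \<le> a - 2 * t * B + t\<^sup>2 * B * c" and B: "0 \<le> B" and c: "0 \<le> c"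
  shows "B \<le> a * c"
proof (cases "c = 0")
  case True
  have "B = 0"
  proof (rule ccontr)
    assume "B \<noteq> 0"
    hence "a - 2 * ((a + 1) / (2 * B)) * B = -1" by (simp add: field_simps)
    thus False using quadratic[of "(a + 1) / (2 * B)"] True by simp
  qed
  thus ?thesis using True by simp
next
  case False
  hence "c > 0" using c by simp
  moreover have "a - 2 * (1/c) * B + (1/c)\<^sup>2 * B * c = a - B / c"
    using \<open>c > 0\<close> by (simp add: field_simps power2_eq_square)
  ultimately have "0 \<le> a - B / c" using quadratic[of "1/c"] by simp
  thus ?thesis using \<open>c > 0\<close> by (simp add: field_simps)
qed

lemma psd_sesq_form_cauchy_schwarz:
  assumes psd: "psd_mat n A"
  shows "(cmod (sesq_form n A f g))\<^sup>2 \<le> Re (sesq_form n A f f) * Re (sesq_form n A g g)"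
proof (rule le_mult_of_quadratic_nonneg)
  define b where "b = sesq_form n A f g"
  define a where "a = Re (sesq_form n A f f)"
  define c where "c = Re (sesq_form n A g g)"
  have aa: "sesq_form n A f f = complex_of_real a"
    using psd_sesq_form_real[OF psd, of f] unfolding a_def .
  have cc: "sesq_form n A g g = complex_of_real c"
    using psd_sesq_form_real[OF psd, of g] unfolding c_def .
  have gf: "sesq_form n A g f = cnj b"
    unfolding b_def using psd unfolding psd_mat_def by (intro hermitian_sesq_form_swap) auto
  fix t :: real
  define l where "l = - complex_of_real t * cnj b"
  have "0 \<le> Re (sesq_form n A (\<lambda>i. f i + l * g i) (\<lambda>i. f i + l * g i))"
    by (rule psd_sesq_form(2)[OF psd])
  also have "sesq_form n A (\<lambda>i. f i + l * g i) (\<lambda>i. f i + l * g i)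
      = complex_of_real a + l * b + cnj l * cnj b + cnj l * l * complex_of_real c"
    unfolding sesq_form_add_scaled aa cc gf b_def ..
  also have "Re \<dots> = a - 2 * t * (cmod b)\<^sup>2 + t\<^sup>2 * (cmod b)\<^sup>2 * c"
    unfolding l_def cmod_power2 by (simp add: power2_eq_square algebra_simps)
  finally show "0 \<le> Re (sesq_form n A f f) - 2 * t * (cmod (sesq_form n A f g))\<^sup>2
      + t\<^sup>2 * (cmod (sesq_form n A f g))\<^sup>2 * Re (sesq_form n A g g)"
    unfolding a_def b_def c_def .
qed (use psd_sesq_form(2)[OF psd] in simp_all)

lemma sesq_form_unit_left:
  "k < n \<Longrightarrow> sesq_form n A (\<lambda>a. of_bool (a = k)) g = (\<Sum>b<n. A $$ (k,b) * g b)"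
  unfolding sesq_form_def of_bool_def by (simp add: if_distrib if_distribR sum.If_cases)

lemma sesq_form_unit_unit:
  "k < n \<Longrightarrow> sesq_form n A (\<lambda>a. of_bool (a = k)) (\<lambda>a. of_bool (a = k)) = A $$ (k,k)"
  by (subst sesq_form_unit_left) simp_all

lemma psd_diag_entry:
  assumes "psd_mat n A" "k < n"
  shows "A $$ (k,k) = complex_of_real (Re (A $$ (k,k)))" "0 \<le> Re (A $$ (k,k))"
  using psd_sesq_form[OF assms(1), of "\<lambda>a. of_bool (a = k)"] sesq_form_unit_unit[OF assms(2), of A]
  by (auto simp: complex_eq_iff)

lemma psd_mtrace:
  assumes "psd_mat n A"
  shows "mtrace A = complex_of_real (\<Sum>k<n. Re (A $$ (k,k)))"
  using assms psd_diag_entry(1)[OF assms] unfolding mtrace_def psd_mat_def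
  by (auto simp: of_real_sum intro!: sum.cong)

lemma psd_row_bound:
  assumes "psd_mat n A" "k < n"
  shows "(cmod (\<Sum>b<n. A $$ (k,b) * g b))\<^sup>2 \<le> Re (A $$ (k,k)) * Re (sesq_form n A g g)"
  using psd_sesq_form_cauchy_schwarz[OF assms(1), of "\<lambda>a. of_bool (a = k)" g]
  unfolding sesq_form_unit_unit[OF assms(2)] sesq_form_unit_left[OF assms(2)] .

lemma unitary_mat_col_norm:
  assumes U: "unitary_mat n U" and i: "i < n"
  shows "(\<Sum>k<n. (cmod (U $$ (k,i)))\<^sup>2) = 1"
proof -
  have Uc: "U \<in> carrier_mat n n" using U by (rule unitary_mat_carrier)
  have "complex_of_real (\<Sum>k<n. (cmod (U $$ (k,i)))\<^sup>2) = (\<Sum>k<n. cnj (U $$ (k,i)) * U $$ (k,i))"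
    by (simp only: of_real_sum complex_norm_square mult.commute)
  also have "\<dots> = (mat_adjoint U * U) $$ (i,i)"
    using Uc i by (subst index_mult_mat_sum[of _ n n _ n]) auto
  also have "\<dots> = 1" using U i unfolding unitary_mat_def by simp
  finally show ?thesis by (simp only: of_real_eq_1_iff)
qed

lemma unitary_diag_eigencol:
  assumes U: "unitary_mat n U" and i: "i < n" and k: "k < n"
  shows "(\<Sum>b<n. (U * real_diag_mat n x * mat_adjoint U) $$ (k,b) * U $$ (b,i))
    = complex_of_real (x i) * U $$ (k,i)"
proof -
  have Uc: "U \<in> carrier_mat n n" using U by (rule unitary_mat_carrier)
  have "(U * real_diag_mat n x * mat_adjoint U) * U = U * real_diag_mat n x * (mat_adjoint U * U)"
    using Uc by (simp add: assoc_mult_mat[of _ n n _ n _ n])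
  also have "\<dots> = U * real_diag_mat n x" using U Uc unfolding unitary_mat_def by simp
  finally have XU: "(U * real_diag_mat n x * mat_adjoint U) * U = U * real_diag_mat n x" .
  have "(\<Sum>b<n. (U * real_diag_mat n x * mat_adjoint U) $$ (k,b) * U $$ (b,i))
      = ((U * real_diag_mat n x * mat_adjoint U) * U) $$ (k,i)"
    using Uc i k by (subst index_mult_mat_sum[of _ n n _ n]) auto
  also have "\<dots> = (\<Sum>b<n. U $$ (k,b) * real_diag_mat n x $$ (b,i))"
    unfolding XU using Uc i k by (intro index_mult_mat_sum) auto
  also have "\<dots> = (\<Sum>b\<in>{..<n}. if b = i then U $$ (k,i) * complex_of_real (x i) else 0)"
    using i by (intro sum.cong) auto
  also have "\<dots> = complex_of_real (x i) * U $$ (k,i)" using i by simp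
  finally show ?thesis .
qed

context
  fixes n :: nat and Q R :: "complex mat" and u :: "nat \<Rightarrow> complex" and \<mu> :: real
  assumes Q: "psd_mat n Q" and R: "psd_mat n R"
    and u: "(\<Sum>k<n. (cmod (u k))\<^sup>2) = 1"
    and eig: "\<And>k. k < n \<Longrightarrow> (\<Sum>b<n. (Q + R) $$ (k,b) * u b) = complex_of_real \<mu> * u k"
begin

lemma psd_sum_eigenvector_split:
  "(\<Sum>b<n. Q $$ (k,b) * u b) + (\<Sum>b<n. R $$ (k,b) * u b) = complex_of_real \<mu> * u k" if "k < n"
proof -
  have "Q \<in> carrier_mat n n" "R \<in> carrier_mat n n" using Q R unfolding psd_mat_def by auto
  hence "(\<Sum>b<n. (Q + R) $$ (k,b) * u b) = (\<Sum>b<n. Q $$ (k,b) * u b + R $$ (k,b) * u b)"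
    using that by (intro sum.cong) (auto simp: distrib_right)
  thus ?thesis using eig[OF that] by (simp add: sum.distrib)
qed

lemma psd_sum_eigenpair_eq: "\<mu> = Re (sesq_form n Q u u) + Re (sesq_form n R u u)"
proof -
  have "(\<Sum>k<n. cnj (u k) * (complex_of_real \<mu> * u k))
      = complex_of_real \<mu> * complex_of_real (\<Sum>k<n. (cmod (u k))\<^sup>2)"
    by (simp only: of_real_sum complex_norm_square sum_distrib_left ac_simps)
  hence "complex_of_real \<mu> = (\<Sum>k<n. cnj (u k) * (complex_of_real \<mu> * u k))"
    unfolding u by simp
  also have "\<dots> = (\<Sum>k<n. cnj (u k) * ((\<Sum>b<n. Q $$ (k,b) * u b) + (\<Sum>b<n. R $$ (k,b) * u b)))"
    by (intro sum.cong) (simp_all add: psd_sum_eigenvector_split)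
  also have "\<dots> = sesq_form n Q u u + sesq_form n R u u"
    unfolding sesq_form_def by (simp add: sum_distrib_left distrib_left sum.distrib ac_simps)
  finally show ?thesis by (metis Re_complex_of_real plus_complex.sel(1))
qed

lemma psd_sum_eigenpair_sq_le:
  defines "s \<equiv> sqrt (Re (sesq_form n Q u u))" and "t \<equiv> sqrt (Re (sesq_form n R u u))"
  shows "\<mu>\<^sup>2 \<le> s\<^sup>2 * (\<Sum>k<n. Re (Q $$ (k,k)))
      + 2 * s * t * (\<Sum>k<n. sqrt (Re (Q $$ (k,k)) * Re (R $$ (k,k))))
      + t\<^sup>2 * (\<Sum>k<n. Re (R $$ (k,k)))"
proof -
  define aQ where "aQ = (\<lambda>k. Re (Q $$ (k,k)))"
  define aR where "aR = (\<lambda>k. Re (R $$ (k,k)))"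
  have aQ0: "0 \<le> aQ k" and aR0: "0 \<le> aR k" if "k < n" for k
    unfolding aQ_def aR_def using psd_diag_entry(2)[OF Q that] psd_diag_entry(2)[OF R that] by auto
  have row_bound: "cmod (\<Sum>b<n. A $$ (k,b) * u b) \<le> sqrt (Re (A $$ (k,k))) * sqrt (Re (sesq_form n A u u))"
    if "psd_mat n A" "k < n" for A k
    using psd_row_bound[OF that, of u] by (simp add: real_le_rsqrt flip: real_sqrt_mult)
  have "\<mu>\<^sup>2 = (\<Sum>k<n. (cmod (complex_of_real \<mu> * u k))\<^sup>2)"
    using u by (simp add: norm_mult power_mult_distrib flip: sum_distrib_left)
  also have "\<dots> \<le> (\<Sum>k<n. (sqrt (aQ k) * s + sqrt (aR k) * t)\<^sup>2)"
  proof (rule sum_mono, rule power_mono)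
    fix k assume "k \<in> {..<n}"
    hence k: "k < n" by simp
    have "cmod (complex_of_real \<mu> * u k) = cmod ((\<Sum>b<n. Q $$ (k,b) * u b) + (\<Sum>b<n. R $$ (k,b) * u b))"
      using psd_sum_eigenvector_split[OF k] by simp
    also have "\<dots> \<le> cmod (\<Sum>b<n. Q $$ (k,b) * u b) + cmod (\<Sum>b<n. R $$ (k,b) * u b)"
      by (rule norm_triangle_ineq)
    also have "\<dots> \<le> sqrt (aQ k) * s + sqrt (aR k) * t"
      unfolding aQ_def aR_def s_def t_def by (intro add_mono row_bound[OF Q k] row_bound[OF R k])
    finally show "cmod (complex_of_real \<mu> * u k) \<le> sqrt (aQ k) * s + sqrt (aR k) * t" .
  qed simp
  also have "\<dots> = s\<^sup>2 * (\<Sum>k<n. aQ k) + 2 * s * t * (\<Sum>k<n. sqrt (aQ k * aR k)) + t\<^sup>2 * (\<Sum>k<n. aR k)"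
    using aQ0 aR0
    by (simp add: power2_eq_square algebra_simps real_sqrt_mult sum.distrib sum_distrib_left)
  finally show ?thesis unfolding aQ_def aR_def .
qed

lemma psd_sum_eigenpair_bounds:
  assumes m: "\<And>s t. s\<^sup>2 * (\<Sum>k<n. Re (Q $$ (k,k)))
      + 2 * s * t * (\<Sum>k<n. sqrt (Re (Q $$ (k,k)) * Re (R $$ (k,k))))
      + t\<^sup>2 * (\<Sum>k<n. Re (R $$ (k,k))) \<le> m * (s\<^sup>2 + t\<^sup>2)"
  shows "0 \<le> \<mu>" "\<mu> \<le> m"
proof -
  define s where "s = sqrt (Re (sesq_form n Q u u))"
  define t where "t = sqrt (Re (sesq_form n R u u))"
  have \<mu>: "\<mu> = s\<^sup>2 + t\<^sup>2"
    unfolding psd_sum_eigenpair_eq s_def t_def using psd_sesq_form(2)[OF Q] psd_sesq_form(2)[OF R] by simp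
  have "\<mu>\<^sup>2 \<le> m * (s\<^sup>2 + t\<^sup>2)"
    unfolding s_def t_def by (rule order_trans[OF psd_sum_eigenpair_sq_le m])
  hence sq: "\<mu>\<^sup>2 \<le> m * \<mu>" unfolding \<mu>[symmetric] .
  have \<mu>0: "0 \<le> \<mu>" unfolding \<mu> by simp
  have "0 \<le> (\<Sum>k<n. Re (Q $$ (k,k)))"
    using psd_diag_entry(2)[OF Q] by (auto intro: sum_nonneg)
  hence "0 \<le> m" using m[of 1 0] by simp
  show "0 \<le> \<mu>" by (fact \<mu>0)
  show "\<mu> \<le> m"
  proof (cases "\<mu> = 0")
    case False
    thus ?thesis using sq \<mu>0 by (intro mult_right_le_imp_le[of \<mu> \<mu> m]) (auto simp: power2_eq_square)
  qed (use \<open>0 \<le> m\<close> in simp)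
qed

end

section \<open>The comparison matrix\<close>

lemma mat2_carrier [simp]: "mat2 a b c e \<in> carrier_mat 2 2"
  unfolding mat2_def mat_of_rows_list_def by auto

lemma mat2_dim [simp]: "dim_row (mat2 a b c e) = 2" "dim_col (mat2 a b c e) = 2"
  unfolding mat2_def mat_of_rows_list_def by auto

lemma index_mat2:
  "i < 2 \<Longrightarrow> j < 2 \<Longrightarrow>
    mat2 a b c e $$ (i,j) = (if i = 0 then (if j = 0 then a else b) else (if j = 0 then c else e))"
  unfolding mat2_def mat_of_rows_list_def by (auto simp: less_2_cases_iff)

lemma sum_lessThan_2: "(\<Sum>k<2. f k) = f 0 + f (1 :: nat)"
  by (simp add: numeral_2_eq_2)

lemma mat_adjoint_real_mat2:
  "mat_adjoint (mat2 (complex_of_real a) (complex_of_real b) (complex_of_real b) (complex_of_real c))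
    = mat2 (complex_of_real a) (complex_of_real b) (complex_of_real b) (complex_of_real c)"
  by (rule eq_matI) (auto simp: index_mat2 less_2_cases_iff)

lemma mtrace_mat2: "mtrace (mat2 a b c e) = a + e"
  unfolding mtrace_def by (simp add: sum_lessThan_2 index_mat2)

lemma mtrace_mat2_square: "mtrace (mat2 a b c e * mat2 a b c e) = a * a + b * c + c * b + e * e"
proof -
  have "(mat2 a b c e * mat2 a b c e) $$ (k,k) = (\<Sum>l<2. mat2 a b c e $$ (k,l) * mat2 a b c e $$ (l,k))"
    if "k < 2" for k
    using that by (intro index_mult_mat_sum) auto
  thus ?thesis unfolding mtrace_def by (simp add: sum_lessThan_2 index_mat2)
qed

lemma real_mat2_eigenvalue_sums:
  assumes W: "unitary_mat 2 W"
    and M: "mat2 (complex_of_real a) (complex_of_real b) (complex_of_real b) (complex_of_real c)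
      = W * real_diag_mat 2 z * mat_adjoint W" (is "?M = _")
  shows "z 0 + z 1 = a + c" "z 0 * z 0 + z 1 * z 1 = a * a + 2 * (b * b) + c * c"
proof -
  have "complex_of_real (z 0 + z 1) = mtrace ?M"
    unfolding M mtrace_unitary_conj[OF W real_diag_mat_carrier] mtrace_real_diag_mat
    by (simp add: sum_lessThan_2)
  from arg_cong[OF this, of Re] show "z 0 + z 1 = a + c" unfolding mtrace_mat2 by simp
  have "complex_of_real (z 0 * z 0 + z 1 * z 1) = mtrace (?M * ?M)"
    unfolding M unitary_diag_square[OF W] mtrace_unitary_conj[OF W real_diag_mat_carrier]
      mtrace_real_diag_mat by (simp add: sum_lessThan_2)
  from arg_cong[OF this, of Re] show "z 0 * z 0 + z 1 * z 1 = a * a + 2 * (b * b) + c * c"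
    unfolding mtrace_mat2_square by simp
qed

lemma nonneg_if_mult_add_nonneg:
  fixes x y :: real
  assumes "0 \<le> x * y" "0 \<le> x + y"
  shows "0 \<le> x" "0 \<le> y"
  using assms zero_le_mult_iff[of x y] by linarith+

lemma psd_2x2_eigenvalues:
  fixes a b c z0 z1 :: real
  assumes sum: "z0 + z1 = a + c" and sq: "z0 * z0 + z1 * z1 = a * a + 2 * (b * b) + c * c"
    and cs: "b * b \<le> a * c" and a: "0 \<le> a" and c: "0 \<le> c"
  shows "0 \<le> z0" "0 \<le> z1" "(max z0 z1 - a) * (max z0 z1 - c) = b\<^sup>2" "a + c \<le> 2 * max z0 z1"
proof -
  have "(z0 + z1) * (z0 + z1) = (a + c) * (a + c)" using sum by simp
  hence prod: "z0 * z1 = a * c - b * b" using sq by (simp add: algebra_simps)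
  show z0: "0 \<le> z0" and z1: "0 \<le> z1"
    using nonneg_if_mult_add_nonneg[of z0 z1] prod cs sum a c by simp_all
  have root: "(z - a) * (z - c) = b\<^sup>2" if "z = z0 \<or> z = z1" for z
  proof -
    have "z * (a + c) = z * (z0 + z1)" using sum by simp
    thus ?thesis using that prod by (auto simp: algebra_simps power2_eq_square)
  qed
  show "(max z0 z1 - a) * (max z0 z1 - c) = b\<^sup>2" by (rule root) (simp add: max_def)
  show "a + c \<le> 2 * max z0 z1" using sum by linarith
qed

lemma quadratic_form_le_larger_root:
  fixes a b c m s t :: real
  assumes root: "(m - a) * (m - c) = b\<^sup>2" and mean: "a + c \<le> 2 * m"
  shows "s\<^sup>2 * a + 2 * s * t * b + t\<^sup>2 * c \<le> m * (s\<^sup>2 + t\<^sup>2)"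
proof -
  define P where "P = m - a"
  define R where "R = m - c"
  have PR: "P * R = b\<^sup>2" using root unfolding P_def R_def .
  have P: "0 \<le> P" and R: "0 \<le> R"
    using nonneg_if_mult_add_nonneg[of P R] PR mean unfolding P_def R_def by simp_all
  have "0 \<le> P * s\<^sup>2 - 2 * s * t * b + R * t\<^sup>2"
  proof (cases "P = 0")
    case True
    thus ?thesis using PR R by simp
  next
    case False
    have "P * (P * s\<^sup>2 - 2 * s * t * b + R * t\<^sup>2) = (P * s - b * t)\<^sup>2"
      using PR by (simp add: power2_eq_square algebra_simps)
    hence "0 \<le> P * (P * s\<^sup>2 - 2 * s * t * b + R * t\<^sup>2)" by simp
    thus ?thesis using False P by (simp add: zero_le_mult_iff)
  qed
  thus ?thesis unfolding P_def R_def by (simp add: algebra_simps)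
qed

section \<open>Majorization by a pair\<close>

(* The value does not decrease when a pair of coordinates (a, b) is replaced by the more
   spread-out pair (A, B) with the same sum, B <= a <= A: the elementary steps of majorization. *)
definition transfer_monotone :: "nat \<Rightarrow> ((nat \<Rightarrow> real) \<Rightarrow> real) \<Rightarrow> bool" where
  "transfer_monotone d \<Phi> \<longleftrightarrow> (\<forall>x i j a b A B. i < d \<longrightarrow> j < d \<longrightarrow> i \<noteq> j \<longrightarrow>
     0 \<le> B \<longrightarrow> B \<le> a \<longrightarrow> a \<le> A \<longrightarrow> a + b = A + B \<longrightarrow> \<Phi> (x(i := a, j := b)) \<le> \<Phi> (x(i := A, j := B)))"

lemma transfer_monotoneI:
  assumes "\<And>x i j a b A B. i < d \<Longrightarrow> j < d \<Longrightarrow> i \<noteq> j \<Longrightarrow> 0 \<le> B \<Longrightarrow> B \<le> a \<Longrightarrow> a \<le> A \<Longrightarrow>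
    a + b = A + B \<Longrightarrow> \<Phi> (x(i := a, j := b)) \<le> \<Phi> (x(i := A, j := B))"
  shows "transfer_monotone d \<Phi>"
  using assms unfolding transfer_monotone_def by blast

lemma transfer_monotoneD:
  assumes "transfer_monotone d \<Phi>" "i < d" "j < d" "i \<noteq> j" "0 \<le> B" "B \<le> a" "a \<le> A" "a + b = A + B"
  shows "\<Phi> (x(i := a, j := b)) \<le> \<Phi> (x(i := A, j := B))"
  using assms unfolding transfer_monotone_def by blast

lemma transfer_step:
  assumes \<Phi>: "transfer_monotone d \<Phi>" and pj: "p < d" "j < d" "p \<noteq> j"
    and x: "0 \<le> x p" "x p \<le> c" "0 \<le> x j" "x j \<le> c"
  obtains x' where "\<Phi> x \<le> \<Phi> x'" "x' p + x' j = x p + x j" "\<And>k. k \<noteq> p \<Longrightarrow> k \<noteq> j \<Longrightarrow> x' k = x k"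
    "0 \<le> x' p" "x' p \<le> c" "0 \<le> x' j" "x' j \<le> c" "x' p = c \<or> x' j = 0"
proof -
  define A where "A = min c (x p + x j)"
  define B where "B = x p + x j - A"
  have "\<Phi> (x(p := x p, j := x j)) \<le> \<Phi> (x(p := A, j := B))"
    by (rule transfer_monotoneD[OF \<Phi> pj]) (use x in \<open>auto simp: A_def B_def\<close>)
  hence "\<Phi> x \<le> \<Phi> (x(p := A, j := B))" by simp
  thus ?thesis by (rule that) (use pj x in \<open>auto simp: A_def B_def\<close>)
qed

lemma transfer_fill:
  assumes \<Phi>: "transfer_monotone d \<Phi>" and p: "p < d" and S: "finite S" "S \<subseteq> {..<d}" "p \<notin> S"
    and x: "0 \<le> x p" "x p \<le> c" "\<forall>j\<in>S. 0 \<le> x j \<and> x j \<le> c" and total: "c \<le> x p + sum x S"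
  shows "\<exists>x'. x' p = c \<and> (\<forall>k. k \<notin> S \<longrightarrow> k \<noteq> p \<longrightarrow> x' k = x k) \<and> (\<forall>j\<in>S. 0 \<le> x' j \<and> x' j \<le> c)
      \<and> x' p + sum x' S = x p + sum x S \<and> \<Phi> x \<le> \<Phi> x'"
  using S x total
proof (induction S arbitrary: x rule: finite_induct)
  case empty
  thus ?case by auto
next
  case (insert j S)
  have j: "j < d" "j \<noteq> p" using insert.prems(1,2) by auto
  obtain x1 where x1: "\<Phi> x \<le> \<Phi> x1" "x1 p + x1 j = x p + x j" "\<And>k. k \<noteq> p \<Longrightarrow> k \<noteq> j \<Longrightarrow> x1 k = x k"
      "0 \<le> x1 p" "x1 p \<le> c" "0 \<le> x1 j" "x1 j \<le> c" "x1 p = c \<or> x1 j = 0"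
    using transfer_step[OF \<Phi> p j(1) j(2)[symmetric]] insert.prems by auto
  have x1S: "x1 k = x k" if "k \<notin> insert j S" "k \<noteq> p" for k
    using that by (intro x1(3)) auto
  have x1_in_S: "x1 k = x k" if "k \<in> S" for k
    using that insert.hyps(2) insert.prems(2) by (intro x1(3)) auto
  hence sumS: "sum x1 S = sum x S" by simp
  have sum_insert: "sum f (insert j S) = f j + sum f S" for f :: "nat \<Rightarrow> real"
    using insert.hyps by simp
  show ?case
  proof (cases "x1 p = c")
    case True
    thus ?thesis using x1 x1S x1_in_S sumS insert.prems(5) unfolding sum_insert by (intro exI[of _ x1]) auto
  next
    case False
    hence "x1 j = 0" using x1(8) by simp
    have "\<exists>x'. x' p = c \<and> (\<forall>k. k \<notin> S \<longrightarrow> k \<noteq> p \<longrightarrow> x' k = x1 k) \<and> (\<forall>j\<in>S. 0 \<le> x' j \<and> x' j \<le> c)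
        \<and> x' p + sum x' S = x1 p + sum x1 S \<and> \<Phi> x1 \<le> \<Phi> x'"
    proof (rule insert.IH)
      show "S \<subseteq> {..<d}" "p \<notin> S" using insert.prems(1,2) by auto
      show "0 \<le> x1 p" "x1 p \<le> c" by (fact x1(4), fact x1(5))
      show "\<forall>j\<in>S. 0 \<le> x1 j \<and> x1 j \<le> c" using insert.prems(5) x1_in_S by auto
      show "c \<le> x1 p + sum x1 S" using insert.prems(6) x1(2) sumS \<open>x1 j = 0\<close> unfolding sum_insert by linarith
    qed
    then obtain x' where x': "x' p = c" "\<forall>k. k \<notin> S \<longrightarrow> k \<noteq> p \<longrightarrow> x' k = x1 k"
        "\<forall>j\<in>S. 0 \<le> x' j \<and> x' j \<le> c" "x' p + sum x' S = x1 p + sum x1 S" "\<Phi> x1 \<le> \<Phi> x'"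
      by blast
    have "x' j = 0" using x'(2) \<open>x1 j = 0\<close> insert.hyps(2) j(2) by auto
    moreover have "\<forall>k. k \<notin> insert j S \<longrightarrow> k \<noteq> p \<longrightarrow> x' k = x k" using x'(2) x1S by auto
    moreover have "x' p + sum x' (insert j S) = x p + sum x (insert j S)"
      using x'(4) x1(2) sumS \<open>x1 j = 0\<close> \<open>x' j = 0\<close> unfolding sum_insert by linarith
    ultimately show ?thesis using x'(1,3,5) x1(1,4,5) by (intro exI[of _ x']) auto
  qed
qed

lemma transfer_monotone_le_pair:
  assumes \<Phi>: "transfer_monotone d \<Phi>" and local: "\<And>x y. (\<forall>k<d. x k = y k) \<Longrightarrow> \<Phi> x = \<Phi> y"
    and p: "p1 < d" "p2 < d" "p1 \<noteq> p2" and c: "0 \<le> c2" "c2 \<le> c1"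
    and x: "\<forall>k<d. 0 \<le> x k \<and> x k \<le> c1" and total: "(\<Sum>k<d. x k) = c1 + c2"
  shows "\<Phi> x \<le> \<Phi> ((\<lambda>_. 0)(p1 := c1, p2 := c2))"
proof -
  define S1 where "S1 = {..<d} - {p1}"
  define S2 where "S2 = S1 - {p2}"
  have S: "finite S1" "S1 \<subseteq> {..<d}" "p1 \<notin> S1" "finite S2" "S2 \<subseteq> {..<d}" "p2 \<notin> S2" "p1 \<notin> S2"
    unfolding S1_def S2_def by auto
  have "x p1 + sum x S1 = c1 + c2"
    using total p(1) unfolding S1_def by (simp add: sum.remove)
  then obtain x' where x': "x' p1 = c1" "\<forall>k. k \<notin> S1 \<longrightarrow> k \<noteq> p1 \<longrightarrow> x' k = x k"
      "\<forall>j\<in>S1. 0 \<le> x' j \<and> x' j \<le> c1" "x' p1 + sum x' S1 = c1 + c2" "\<Phi> x \<le> \<Phi> x'"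
    using transfer_fill[OF \<Phi> p(1) S(1-3), of x c1] x p c unfolding S1_def by auto
  have "sum x' S1 = x' p2 + sum x' S2"
    unfolding S2_def using S(1) p by (intro sum.remove) (auto simp: S1_def)
  hence rest: "x' p2 + sum x' S2 = c2" using x'(1,4) by simp
  have nonneg: "\<forall>j\<in>S2. 0 \<le> x' j" "0 \<le> x' p2" using x'(3) p unfolding S2_def S1_def by auto
  hence "\<forall>j\<in>S2. x' j \<le> sum x' S2" using S(4) by (auto intro: member_le_sum)
  hence "\<forall>j\<in>S2. 0 \<le> x' j \<and> x' j \<le> c2" using nonneg rest by force
  moreover have "0 \<le> sum x' S2" using nonneg by (auto intro: sum_nonneg)
  ultimately have "\<exists>x''. x'' p2 = c2 \<and> (\<forall>k. k \<notin> S2 \<longrightarrow> k \<noteq> p2 \<longrightarrow> x'' k = x' k)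
      \<and> (\<forall>j\<in>S2. 0 \<le> x'' j \<and> x'' j \<le> c2) \<and> x'' p2 + sum x'' S2 = x' p2 + sum x' S2 \<and> \<Phi> x' \<le> \<Phi> x''"
    using rest nonneg by (intro transfer_fill[OF \<Phi> p(2) S(4-6)]) auto
  then obtain x'' where x'': "x'' p2 = c2" "\<forall>k. k \<notin> S2 \<longrightarrow> k \<noteq> p2 \<longrightarrow> x'' k = x' k"
      "\<forall>j\<in>S2. 0 \<le> x'' j \<and> x'' j \<le> c2" "x'' p2 + sum x'' S2 = c2" "\<Phi> x' \<le> \<Phi> x''"
    using rest by auto
  have "\<forall>j\<in>S2. x'' j = 0"
    using x''(1,3,4) sum_nonneg_eq_0_iff[OF S(4), of x''] by auto
  hence "\<forall>k<d. x'' k = ((\<lambda>_. 0)(p1 := c1, p2 := c2)) k"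
    using x''(1,2) x'(1) S(7) p(3) unfolding S2_def S1_def by auto
  hence "\<Phi> x'' = \<Phi> ((\<lambda>_. 0)(p1 := c1, p2 := c2))" by (rule local)
  thus ?thesis using x'(5) x''(5) by simp
qed

(* For nonnegative x this is exactly the majorization of x by (a, b, 0, ..., 0). *)
definition majorized_by_pair :: "nat \<Rightarrow> (nat \<Rightarrow> real) \<Rightarrow> real \<Rightarrow> real \<Rightarrow> bool" where
  "majorized_by_pair d x a b \<longleftrightarrow>
     0 \<le> a \<and> 0 \<le> b \<and> (\<forall>k<d. 0 \<le> x k \<and> x k \<le> max a b) \<and> (\<Sum>k<d. x k) = a + b"

lemma transfer_monotone_majorized_by_pair:
  assumes \<Phi>: "transfer_monotone d \<Phi>" and local: "\<And>x y. (\<forall>k<d. x k = y k) \<Longrightarrow> \<Phi> x = \<Phi> y"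
    and d: "2 \<le> d" and maj: "majorized_by_pair d x a b"
  shows "\<Phi> x \<le> \<Phi> ((\<lambda>_. 0)(0 := a, 1 := b))"
proof (cases "b \<le> a")
  case True
  thus ?thesis using transfer_monotone_le_pair[OF \<Phi> local, of 0 1 b a x] d maj
    unfolding majorized_by_pair_def by (simp add: max_def)
next
  case False
  hence le: "\<Phi> x \<le> \<Phi> ((\<lambda>_. 0)(1 := b, 0 := a))"
    using transfer_monotone_le_pair[OF \<Phi> local, of 1 0 a b x] d maj
    unfolding majorized_by_pair_def by (simp add: max_def)
  have "(\<lambda>_::nat. 0)(1 := b, 0 := a) = (\<lambda>_. 0 :: real)(0 := a, 1 := b)"
    by (auto simp: fun_eq_iff)
  thus ?thesis using le by metis
qed

section \<open>Unitarily invariant norms and Schatten quasi-norms\<close>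

lemma ui_norm_unitary_conj:
  assumes "ui_norm d N" "unitary_mat d U" "A \<in> carrier_mat d d"
  shows "N (U * A * mat_adjoint U) = N A"
  using assms unitary_mat_adjoint unfolding ui_norm_def by blast

lemma ui_norm_convex:
  assumes N: "ui_norm d N" and A: "A \<in> carrier_mat d d" and B: "B \<in> carrier_mat d d"
    and t: "0 \<le> t" "t \<le> 1"
  shows "N (complex_of_real t \<cdot>\<^sub>m A + complex_of_real (1 - t) \<cdot>\<^sub>m B) \<le> t * N A + (1 - t) * N B"
proof -
  have hom: "N (complex_of_real r \<cdot>\<^sub>m C) = r * N C" if "0 \<le> r" "C \<in> carrier_mat d d" for r C
  proof -
    have "N (complex_of_real r \<cdot>\<^sub>m C) = cmod (complex_of_real r) * N C"
      using N that(2) unfolding ui_norm_def by blast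
    thus ?thesis using that(1) by simp
  qed
  have "N (complex_of_real t \<cdot>\<^sub>m A + complex_of_real (1 - t) \<cdot>\<^sub>m B)
      \<le> N (complex_of_real t \<cdot>\<^sub>m A) + N (complex_of_real (1 - t) \<cdot>\<^sub>m B)"
    using N A B unfolding ui_norm_def by (meson smult_carrier_mat)
  also have "\<dots> = t * N A + (1 - t) * N B"
    using hom[of t A] hom[of "1 - t" B] A B t by (simp only:)
  finally show ?thesis .
qed

definition swap_mat :: "nat \<Rightarrow> nat \<Rightarrow> nat \<Rightarrow> complex mat" where
  "swap_mat d i j = mat d d (\<lambda>(r,c). of_bool (r = Transposition.transpose i j c))"

lemma swap_mat_carrier [simp]: "swap_mat d i j \<in> carrier_mat d d"
  unfolding swap_mat_def by simp

lemma swap_mat_dim [simp]: "dim_row (swap_mat d i j) = d" "dim_col (swap_mat d i j) = d"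
  unfolding swap_mat_def by simp_all

lemma transpose_less: "i < d \<Longrightarrow> j < d \<Longrightarrow> k < d \<Longrightarrow> Transposition.transpose i j k < d"
  by (simp add: Transposition.transpose_def)

lemma swap_mat_mult_left:
  assumes ij: "i < d" "j < d" and A: "A \<in> carrier_mat d n" and r: "r < d" and c: "c < n"
  shows "(swap_mat d i j * A) $$ (r,c) = A $$ (Transposition.transpose i j r, c)"
proof -
  have "(swap_mat d i j * A) $$ (r,c) = (\<Sum>k<d. swap_mat d i j $$ (r,k) * A $$ (k,c))"
    using A r c by (intro index_mult_mat_sum) auto
  also have "\<dots> = (\<Sum>k\<in>{..<d}. if k = Transposition.transpose i j r then A $$ (k,c) else 0)"
    using r by (intro sum.cong) (auto simp: swap_mat_def Transposition.transpose_def)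
  also have "\<dots> = A $$ (Transposition.transpose i j r, c)" using transpose_less[OF ij r] by simp
  finally show ?thesis .
qed

lemma mat_adjoint_swap_mat: "i < d \<Longrightarrow> j < d \<Longrightarrow> mat_adjoint (swap_mat d i j) = swap_mat d i j"
  by (rule eq_matI) (auto simp: swap_mat_def Transposition.transpose_def)

lemma unitary_swap_mat:
  assumes ij: "i < d" "j < d"
  shows "unitary_mat d (swap_mat d i j)"
proof -
  have "swap_mat d i j * swap_mat d i j = 1\<^sub>m d"
  proof (rule eq_matI)
    fix r c assume "r < dim_row (1\<^sub>m d)" "c < dim_col (1\<^sub>m d)"
    hence r: "r < d" and c: "c < d" by auto
    show "(swap_mat d i j * swap_mat d i j) $$ (r,c) = 1\<^sub>m d $$ (r,c)"
      unfolding swap_mat_mult_left[OF ij swap_mat_carrier r c]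
      using r c transpose_less[OF ij r] by (auto simp: swap_mat_def Transposition.transpose_def)
  qed auto
  thus ?thesis unfolding unitary_mat_def mat_adjoint_swap_mat[OF ij] by simp
qed

lemma swap_mat_conj_real_diag_mat:
  assumes ij: "i < d" "j < d"
  shows "swap_mat d i j * real_diag_mat d x * mat_adjoint (swap_mat d i j)
    = real_diag_mat d (x \<circ> Transposition.transpose i j)"
proof (rule eq_matI)
  let ?P = "swap_mat d i j" and ?D = "real_diag_mat d x" and ?\<tau> = "Transposition.transpose i j"
  fix r c assume "r < dim_row (real_diag_mat d (x \<circ> ?\<tau>))" "c < dim_col (real_diag_mat d (x \<circ> ?\<tau>))"
  hence r: "r < d" and c: "c < d" by auto
  have "?D * ?P = mat_adjoint (?P * ?D)"
    by (simp add: mat_adjoint_mult[of _ d d _ d] mat_adjoint_swap_mat[OF ij])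
  hence "(?P * ?D * mat_adjoint ?P) $$ (r,c) = mat_adjoint (?P * ?D) $$ (?\<tau> r, c)"
    unfolding mat_adjoint_swap_mat[OF ij]
    using swap_mat_mult_left[OF ij _ r c, of "?D * ?P"] by (simp add: assoc_mult_mat[of _ d d _ d _ d])
  also have "\<dots> = cnj ((?P * ?D) $$ (c, ?\<tau> r))" using transpose_less[OF ij r] c by simp
  also have "(?P * ?D) $$ (c, ?\<tau> r) = ?D $$ (?\<tau> c, ?\<tau> r)"
    by (rule swap_mat_mult_left[OF ij real_diag_mat_carrier c transpose_less[OF ij r]])
  also have "cnj (?D $$ (?\<tau> c, ?\<tau> r)) = real_diag_mat d (x \<circ> ?\<tau>) $$ (r,c)"
    using r c transpose_less[OF ij r] transpose_less[OF ij c] by (auto simp: Transposition.transpose_def)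
  finally show "(?P * ?D * mat_adjoint ?P) $$ (r,c) = real_diag_mat d (x \<circ> ?\<tau>) $$ (r,c)" .
qed auto

lemma ui_norm_transfer_monotone:
  assumes N: "ui_norm d N"
  shows "transfer_monotone d (\<lambda>v. N (real_diag_mat d v))"
proof (rule transfer_monotoneI)
  fix x :: "nat \<Rightarrow> real" and i j :: nat and a b A B :: real
  assume ij: "i < d" "j < d" "i \<noteq> j" and ab: "0 \<le> B" "B \<le> a" "a \<le> A" "a + b = A + B"
  define v where "v = x(i := A, j := B)"
  show "N (real_diag_mat d (x(i := a, j := b))) \<le> N (real_diag_mat d v)"
  proof (cases "A = B")
    case True
    thus ?thesis using ab unfolding v_def by simp
  next
    case False
    define t where "t = (a - B) / (A - B)"
    have t: "0 \<le> t" "t \<le> 1" "t * (A - B) = a - B" unfolding t_def using ab False by auto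
    have swap: "v \<circ> Transposition.transpose i j = x(i := B, j := A)"
      unfolding v_def using ij by (auto simp: Transposition.transpose_def)
    have "x(i := a, j := b) = (\<lambda>k. t * v k + (1 - t) * (v \<circ> Transposition.transpose i j) k)"
      unfolding swap unfolding v_def using ij t ab by (auto simp: fun_eq_iff algebra_simps)
    hence "N (real_diag_mat d (x(i := a, j := b))) = N (complex_of_real t \<cdot>\<^sub>m real_diag_mat d v
        + complex_of_real (1 - t) \<cdot>\<^sub>m real_diag_mat d (v \<circ> Transposition.transpose i j))"
      by (simp only: real_diag_mat_combination)
    also have "\<dots> \<le> t * N (real_diag_mat d v) + (1 - t) * N (real_diag_mat d (v \<circ> Transposition.transpose i j))"
      by (rule ui_norm_convex[OF N real_diag_mat_carrier real_diag_mat_carrier t(1,2)])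
    also have "N (real_diag_mat d (v \<circ> Transposition.transpose i j)) = N (real_diag_mat d v)"
      unfolding swap_mat_conj_real_diag_mat[OF ij(1,2), symmetric]
      by (rule ui_norm_unitary_conj[OF N unitary_swap_mat[OF ij(1,2)] real_diag_mat_carrier])
    finally have "N (real_diag_mat d (x(i := a, j := b)))
        \<le> t * N (real_diag_mat d v) + (1 - t) * N (real_diag_mat d v)" .
    moreover have "t * y + (1 - t) * y = y" for y :: real by (simp add: algebra_simps)
    ultimately show ?thesis by (simp only:)
  qed
qed

lemma powr_le_tangent:
  fixes q r :: real
  assumes q: "0 < q" "q \<le> 1" and r: "0 \<le> r"
  shows "r powr q \<le> 1 + q * (r - 1)"
proof (cases "r = 0")
  case False
  hence "r powr q * 1 powr (1 - q) \<le> q * r + (1 - q) * 1"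
    using q r by (intro Youngs_inequality_0) auto
  thus ?thesis by (simp add: algebra_simps)
qed (use q in simp)

lemma powr_concave:
  fixes q u v t :: real
  assumes q: "0 < q" "q \<le> 1" and uv: "0 \<le> u" "0 \<le> v" and t: "0 \<le> t" "t \<le> 1"
  shows "t * u powr q + (1 - t) * v powr q \<le> (t * u + (1 - t) * v) powr q"
proof -
  define w where "w = t * u + (1 - t) * v"
  show ?thesis
  proof (cases "w = 0")
    case True
    hence "t * u = 0" "(1 - t) * v = 0" using uv t unfolding w_def by (smt (verit) mult_nonneg_nonneg)+
    thus ?thesis using True unfolding w_def by (auto simp: mult_eq_0_iff)
  next
    case False
    hence w: "w > 0" unfolding w_def using uv t by (smt (verit) mult_nonneg_nonneg)
    have tangent: "y powr q \<le> w powr q * (1 + q * (y / w - 1))" if "0 \<le> y" for y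
    proof -
      have "y powr q = w powr q * (y / w) powr q" using that w by (simp add: powr_divide)
      also have "\<dots> \<le> w powr q * (1 + q * (y / w - 1))"
        using that w by (intro mult_left_mono powr_le_tangent q) auto
      finally show ?thesis .
    qed
    have "t * u powr q + (1 - t) * v powr q
        \<le> t * (w powr q * (1 + q * (u / w - 1))) + (1 - t) * (w powr q * (1 + q * (v / w - 1)))"
      using t uv by (intro add_mono mult_left_mono tangent) auto
    also have "\<dots> = w powr q * (1 + q * ((t * u + (1 - t) * v) / w - 1))"
      by (simp add: algebra_simps add_divide_distrib diff_divide_distrib)
    also have "\<dots> = w powr q" unfolding w_def[symmetric] using w by simp
    finally show ?thesis unfolding w_def .
  qed
qed

lemma powr_transfer_le:
  fixes q a b A B :: real
  assumes q: "0 < q" "q \<le> 1" and ab: "0 \<le> B" "B \<le> a" "a \<le> A" "a + b = A + B"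
  shows "A powr q + B powr q \<le> a powr q + b powr q"
proof (cases "A = B")
  case False
  define t where "t = (a - B) / (A - B)"
  have t: "0 \<le> t" "t \<le> 1" "t * (A - B) = a - B" unfolding t_def using ab False by auto
  have a: "a = t * A + (1 - t) * B" and b: "b = (1 - t) * A + (1 - (1 - t)) * B"
    using t(3) ab(4) by (simp_all add: algebra_simps)
  have "t * A powr q + (1 - t) * B powr q \<le> a powr q"
    unfolding a using ab by (intro powr_concave[OF q _ _ t(1,2)]) auto
  moreover have "(1 - t) * A powr q + (1 - (1 - t)) * B powr q \<le> b powr q"
    unfolding b using ab t by (intro powr_concave[OF q]) auto
  ultimately show ?thesis by (simp add: algebra_simps)
qed (use ab in simp)

lemma sum_fun_upd2:
  fixes f :: "real \<Rightarrow> real" and x :: "nat \<Rightarrow> real"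
  assumes ij: "i < d" "j < d" "i \<noteq> j"
  shows "(\<Sum>k<d. f ((x(i := a, j := b)) k)) = f a + f b + (\<Sum>k\<in>{..<d} - {i, j}. f (x k))"
proof -
  let ?y = "x(i := a, j := b)"
  have "(\<Sum>k<d. f (?y k)) = f (?y i) + (\<Sum>k\<in>{..<d} - {i}. f (?y k))"
    by (rule sum.remove) (use ij in auto)
  also have "(\<Sum>k\<in>{..<d} - {i}. f (?y k)) = f (?y j) + (\<Sum>k\<in>{..<d} - {i} - {j}. f (?y k))"
    by (rule sum.remove) (use ij in auto)
  also have "(\<Sum>k\<in>{..<d} - {i} - {j}. f (?y k)) = (\<Sum>k\<in>{..<d} - {i, j}. f (x k))"
    by (intro sum.cong) auto
  finally have "(\<Sum>k<d. f (?y k)) = f (?y i) + (f (?y j) + (\<Sum>k\<in>{..<d} - {i, j}. f (x k)))" .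
  moreover have "?y i = a" "?y j = b" using ij(3) by simp_all
  ultimately show ?thesis by (simp only: add.assoc)
qed

lemma sum_powr_transfer_monotone:
  assumes q: "0 < q" "q \<le> 1"
  shows "transfer_monotone d (\<lambda>v. - (\<Sum>k<d. v k powr q))"
proof (rule transfer_monotoneI)
  fix x :: "nat \<Rightarrow> real" and i j :: nat and a b A B :: real
  assume ij: "i < d" "j < d" "i \<noteq> j" and ab: "0 \<le> B" "B \<le> a" "a \<le> A" "a + b = A + B"
  have "A powr q + B powr q \<le> a powr q + b powr q" by (rule powr_transfer_le[OF q ab])
  thus "- (\<Sum>k<d. (x(i := a, j := b)) k powr q) \<le> - (\<Sum>k<d. (x(i := A, j := B)) k powr q)"
    unfolding sum_fun_upd2[OF ij, where f = "\<lambda>r. r powr q"] by simp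
qed

lemma ui_norm_majorized_by_pair:
  assumes "ui_norm d N" "2 \<le> d" "majorized_by_pair d x a b"
  shows "N (real_diag_mat d x) \<le> N (real_diag_mat d ((\<lambda>_. 0)(0 := a, 1 := b)))"
  using transfer_monotone_majorized_by_pair[OF ui_norm_transfer_monotone[OF assms(1)] _ assms(2,3)]
  by (metis real_diag_mat_cong)

lemma sum_powr_majorized_by_pair:
  assumes q: "0 < q" "q \<le> 1" and d: "2 \<le> d" and maj: "majorized_by_pair d x a b"
  shows "a powr q + b powr q \<le> (\<Sum>k<d. x k powr q)"
proof -
  have "- (\<Sum>k<d. x k powr q) \<le> - (\<Sum>k<d. ((\<lambda>_. 0)(0 := a, 1 := b)) k powr q)"
    by (rule transfer_monotone_majorized_by_pair[OF sum_powr_transfer_monotone[OF q] _ d maj]) simp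
  also have "(\<Sum>k<d. ((\<lambda>_. 0)(0 := a, 1 := b)) k powr q) = a powr q + b powr q"
    using d by (subst sum_fun_upd2) auto
  finally show ?thesis by simp
qed

section \<open>The spectrum of Q + R\<close>

lemma mtrace_add: "A \<in> carrier_mat n n \<Longrightarrow> B \<in> carrier_mat n n \<Longrightarrow> mtrace (A + B) = mtrace A + mtrace B"
  unfolding mtrace_def by (simp add: sum.distrib)

lemma sum_sqrt_mult_le:
  fixes a b :: "nat \<Rightarrow> real"
  assumes "\<And>k. k \<in> I \<Longrightarrow> 0 \<le> a k" "\<And>k. k \<in> I \<Longrightarrow> 0 \<le> b k"
  shows "(\<Sum>k\<in>I. sqrt (a k * b k))\<^sup>2 \<le> (\<Sum>k\<in>I. a k) * (\<Sum>k\<in>I. b k)"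
  using Cauchy_Schwarz_ineq_sum[of "\<lambda>k. sqrt (a k)" "\<lambda>k. sqrt (b k)" I] assms
  by (simp add: real_sqrt_mult)

lemma dsum_zero_unitary_diag:
  assumes W: "unitary_mat n W" and M: "M = W * real_diag_mat n z * mat_adjoint W"
  shows "dsum_zero M k = block_diag W (1\<^sub>m k)
    * real_diag_mat (n + k) (\<lambda>i. if i < n then z i else 0) * mat_adjoint (block_diag W (1\<^sub>m k))"
proof -
  have Wc: "W \<in> carrier_mat n n" using W by (rule unitary_mat_carrier)
  have "dsum_zero M k = block_diag M (1\<^sub>m k * real_diag_mat k (\<lambda>_. 0) * mat_adjoint (1\<^sub>m k))"
    unfolding dsum_zero_def block_diag_def M using Wc by (auto intro!: eq_matI)
  also have "\<dots> = block_diag W (1\<^sub>m k) * block_diag (real_diag_mat n z) (real_diag_mat k (\<lambda>_. 0))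
      * mat_adjoint (block_diag W (1\<^sub>m k))"
    unfolding M using Wc by (intro block_diag_unitary_conj[symmetric]) auto
  also have "block_diag (real_diag_mat n z) (real_diag_mat k (\<lambda>_. 0))
      = real_diag_mat (n + k) (\<lambda>i. if i < n then z i else 0)"
    by (subst real_diag_mat_add_dim) (auto intro!: arg_cong2[where f = block_diag] real_diag_mat_cong)
  finally show ?thesis .
qed

lemma dsum_zero_pair_unitary_diag:
  assumes d: "2 \<le> d" and W: "unitary_mat 2 W" and M: "M = W * real_diag_mat 2 z * mat_adjoint W"
  obtains V where "unitary_mat d V"
    "dsum_zero M (d - 2) = V * real_diag_mat d ((\<lambda>_. 0)(0 := z 0, 1 := z 1)) * mat_adjoint V"
proof
  have d2: "2 + (d - 2) = d" using d by simp
  show "unitary_mat d (block_diag W (1\<^sub>m (d - 2)))"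
    using unitary_mat_block_diag[OF W unitary_mat_one[of "d - 2"]] unfolding d2 .
  have "(\<lambda>i. if i < 2 then z i else 0) = (\<lambda>_. 0)(0 := z 0, 1 := z 1)"
    by (auto simp: fun_eq_iff less_2_cases_iff)
  thus "dsum_zero M (d - 2) = block_diag W (1\<^sub>m (d - 2))
      * real_diag_mat d ((\<lambda>_. 0)(0 := z 0, 1 := z 1)) * mat_adjoint (block_diag W (1\<^sub>m (d - 2)))"
    using dsum_zero_unitary_diag[OF W M, of "d - 2"] unfolding d2 by (simp only:)
qed

lemma psd_sum_eigenvalues_bounded:
  assumes Q: "psd_mat d Q" and R: "psd_mat d R" and U: "unitary_mat d U"
    and QR: "Q + R = U * real_diag_mat d x * mat_adjoint U"
    and m: "\<And>s t. s\<^sup>2 * (\<Sum>k<d. Re (Q $$ (k,k)))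
      + 2 * s * t * (\<Sum>k<d. sqrt (Re (Q $$ (k,k)) * Re (R $$ (k,k))))
      + t\<^sup>2 * (\<Sum>k<d. Re (R $$ (k,k))) \<le> m * (s\<^sup>2 + t\<^sup>2)"
    and i: "i < d"
  shows "0 \<le> x i" "x i \<le> m"
  using psd_sum_eigenpair_bounds[OF Q R unitary_mat_col_norm[OF U i] _ m]
    unitary_diag_eigencol[OF U i, of _ x] unfolding QR by auto

lemma psd_mat2_diagonalization:
  fixes a b c :: real
  assumes "0 \<le> a" "0 \<le> c" "b * b \<le> a * c"
  obtains W z where "unitary_mat 2 W"
    "mat2 (complex_of_real a) (complex_of_real b) (complex_of_real b) (complex_of_real c)
      = W * real_diag_mat 2 z * mat_adjoint W"
    "0 \<le> z 0" "0 \<le> z 1" "z 0 + z 1 = a + c"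
    "\<And>s t. s\<^sup>2 * a + 2 * s * t * b + t\<^sup>2 * c \<le> max (z 0) (z 1) * (s\<^sup>2 + t\<^sup>2)"
proof -
  obtain W z where W: "unitary_mat 2 W"
    and M: "mat2 (complex_of_real a) (complex_of_real b) (complex_of_real b) (complex_of_real c)
      = W * real_diag_mat 2 z * mat_adjoint W"
    using hermitian_unitary_diagonalization[OF mat2_carrier mat_adjoint_real_mat2] by blast
  note z = real_mat2_eigenvalue_sums[OF W M]
  note roots = psd_2x2_eigenvalues[OF z assms(3,1,2)]
  show ?thesis
    using that[OF W M roots(1,2) z(1) quadratic_form_le_larger_root[OF roots(3,4)]] .
qed

lemma psd_sum_eigenvalues_majorized:
  assumes Q: "psd_mat d Q" and R: "psd_mat d R"
  defines "y \<equiv> complex_of_real (\<Sum>k<d. sqrt (Re (Q $$ (k,k)) * Re (R $$ (k,k))))"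
  obtains U x W z where "unitary_mat d U" "Q + R = U * real_diag_mat d x * mat_adjoint U"
    "unitary_mat 2 W" "mat2 (mtrace Q) y y (mtrace R) = W * real_diag_mat 2 z * mat_adjoint W"
    "majorized_by_pair d x (z 0) (z 1)"
proof -
  define a where "a = (\<Sum>k<d. Re (Q $$ (k,k)))"
  define c where "c = (\<Sum>k<d. Re (R $$ (k,k)))"
  define b where "b = (\<Sum>k<d. sqrt (Re (Q $$ (k,k)) * Re (R $$ (k,k))))"
  have Qc: "Q \<in> carrier_mat d d" and Rc: "R \<in> carrier_mat d d"
    using Q R unfolding psd_mat_def by auto
  have diag: "0 \<le> Re (Q $$ (k,k))" "0 \<le> Re (R $$ (k,k))" if "k \<in> {..<d}" for k
    using psd_diag_entry(2)[OF Q] psd_diag_entry(2)[OF R] that by auto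
  have "0 \<le> a" "0 \<le> c" unfolding a_def c_def using diag by (auto intro: sum_nonneg)
  moreover have "b * b \<le> a * c"
    using sum_sqrt_mult_le[of "{..<d}", OF diag] unfolding a_def b_def c_def by (simp add: power2_eq_square)
  ultimately obtain W z where W: "unitary_mat 2 W"
    and M: "mat2 (complex_of_real a) (complex_of_real b) (complex_of_real b) (complex_of_real c)
      = W * real_diag_mat 2 z * mat_adjoint W"
    and z: "0 \<le> z 0" "0 \<le> z 1" "z 0 + z 1 = a + c"
    and m: "\<And>s t. s\<^sup>2 * a + 2 * s * t * b + t\<^sup>2 * c \<le> max (z 0) (z 1) * (s\<^sup>2 + t\<^sup>2)"
    using psd_mat2_diagonalization by blast
  have "mat_adjoint (Q + R) = Q + R"
    using Q R Qc Rc unfolding psd_mat_def by (simp add: mat_adjoint_add)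
  then obtain U x where U: "unitary_mat d U" and QR: "Q + R = U * real_diag_mat d x * mat_adjoint U"
    using hermitian_unitary_diagonalization[of "Q + R" d] Qc Rc by auto
  have "complex_of_real (\<Sum>k<d. x k) = mtrace (Q + R)"
    unfolding QR mtrace_unitary_conj[OF U real_diag_mat_carrier] mtrace_real_diag_mat ..
  also have "\<dots> = complex_of_real (z 0 + z 1)"
    unfolding mtrace_add[OF Qc Rc] psd_mtrace[OF Q] psd_mtrace[OF R] z(3) a_def c_def by simp
  finally have "(\<Sum>k<d. x k) = z 0 + z 1" by (simp only: of_real_eq_iff)
  hence "majorized_by_pair d x (z 0) (z 1)"
    unfolding majorized_by_pair_def
    using z psd_sum_eigenvalues_bounded[OF Q R U QR m[unfolded a_def b_def c_def]] by blast
  moreover have "mat2 (mtrace Q) y y (mtrace R) = W * real_diag_mat 2 z * mat_adjoint W"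
    unfolding psd_mtrace[OF Q] psd_mtrace[OF R] y_def M[symmetric] a_def b_def c_def ..
  ultimately show ?thesis using that U QR W by blast
qed

theorem mainTheorem4:
  fixes d :: nat and Q R :: "complex mat"
  assumes "d \<ge> 2" and "psd_mat d Q" and "psd_mat d R"
  defines "y \<equiv> complex_of_real (\<Sum>k<d. sqrt (Re (Q $$ (k,k)) * Re (R $$ (k,k))))"
  shows "(\<forall>N. ui_norm d N \<longrightarrow>
            N (Q + R) \<le> N (dsum_zero (mat2 (mtrace Q) y y (mtrace R)) (d - 2)))
       \<and> (\<forall>q::real. 0 < q \<and> q \<le> 1 \<longrightarrow>
            schatten q (Q + R) \<ge> schatten q (mat2 (mtrace Q) y y (mtrace R)))"
proof -
  obtain U x W z where U: "unitary_mat d U" and QR: "Q + R = U * real_diag_mat d x * mat_adjoint U"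
    and W: "unitary_mat 2 W" and M: "mat2 (mtrace Q) y y (mtrace R) = W * real_diag_mat 2 z * mat_adjoint W"
    and maj: "majorized_by_pair d x (z 0) (z 1)"
    using psd_sum_eigenvalues_majorized[OF assms(2,3)] unfolding y_def by blast
  obtain V where V: "unitary_mat d V"
    and dsum: "dsum_zero (mat2 (mtrace Q) y y (mtrace R)) (d - 2)
      = V * real_diag_mat d ((\<lambda>_. 0)(0 := z 0, 1 := z 1)) * mat_adjoint V"
    using dsum_zero_pair_unitary_diag[OF assms(1) W M] .
  show ?thesis
  proof (intro conjI allI impI)
    fix N assume N: "ui_norm d N"
    have "N (Q + R) = N (real_diag_mat d x)"
      unfolding QR by (rule ui_norm_unitary_conj[OF N U real_diag_mat_carrier])
    also have "\<dots> \<le> N (real_diag_mat d ((\<lambda>_. 0)(0 := z 0, 1 := z 1)))"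
      by (rule ui_norm_majorized_by_pair[OF N assms(1) maj])
    also have "\<dots> = N (dsum_zero (mat2 (mtrace Q) y y (mtrace R)) (d - 2))"
      unfolding dsum by (rule ui_norm_unitary_conj[OF N V real_diag_mat_carrier, symmetric])
    finally show "N (Q + R) \<le> N (dsum_zero (mat2 (mtrace Q) y y (mtrace R)) (d - 2))" .
  next
    fix q :: real assume q: "0 < q \<and> q \<le> 1"
    have "schatten q (mat2 (mtrace Q) y y (mtrace R)) = (z 0 powr q + z 1 powr q) powr (1/q)"
      unfolding M schatten_unitary_diag[OF W] using maj by (simp add: majorized_by_pair_def sum_lessThan_2)
    also have "\<dots> \<le> (\<Sum>k<d. x k powr q) powr (1/q)"
      using q sum_powr_majorized_by_pair[OF _ _ assms(1) maj, of q] by (intro powr_mono2) auto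
    also have "\<dots> = schatten q (Q + R)"
      unfolding QR schatten_unitary_diag[OF U] using maj by (simp add: majorized_by_pair_def)
    finally show "schatten q (mat2 (mtrace Q) y y (mtrace R)) \<le> schatten q (Q + R)" .
  qed
qed

end
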